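(* In the multi-robot sensing/transport system described in the context, fix a sensing allocation $\{m_i\}_{i\in V_{\mathrm{s}}}$ with $\sum_{i\in V_{\mathrm{s}}}m_i\le N$ satisfying the parallel memoryless group sensing assumption, and let $T$ be a shortest-path tree rooted at $0$. Let $\pi$ be any admissible joint policy whose conveyor layer provides full-conveyor coverage on $T$. Then for every $i\in V_{\mathrm{s}}$, \[ \bar{\Delta}_i(\pi)=2\,\mu_i(m_i)-2+d_i , \] and $\bar{\Delta}_{\mathrm{avg}}(\pi)=\frac{1}{|V_{\mathrm{s}}|}\sum_{i\in V_{\mathrm{s}}}(2\mu_i(m_i)-2+d_i)$, the network-wide lower bound (valid for every admissible policy with the same sensing allocation). In particular $\pi$ is AoI-optimal among all admissible policies sharing the sensing allocation $\{m_i\}$.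
   Context: Time is slotted, $t\in\mathbb{Z}_{\ge0}$. $G=(V,E)$ is a finite, connected, undirected graph with base node $0$; $V_{\mathrm{s}}:=V\setminus\{0\}$. Traversing an edge takes one slot; $d_i$ is the hop distance from $i$ to $0$. There are $N$ robots with positions $X_k(t)$, $X_k(0)=0$, each slot moving to an adjacent node or staying. Robots store the most recent sample per origin node, deliver at the base, and may exchange samples instantaneously when co-located (gossip). Robots are split into static sensing robots ($m_i\ge1$ at each $i\in V_{\mathrm{s}}$) and conveyor robots. Parallel memoryless group sensing assumption: the group sensing time $S_i(m)$ is geometric on $\{1,2,\dots\}$ with mean $\mu_i(m)$, strictly decreasing in $m$ with $\mu_i(m)-\mu_i(m+1)$ nonincreasing. Sensing is work-conserving: attempts at node $i$ have i.i.d. durations $S_i^{(n)}(m_i)\sim S_i(m_i)$, the $n$-th starts at $t_i^{\mathrm{start}}(n)$, completes at $g_i^{(n)}=t_i^{\mathrm{start}}(n)+S_i^{(n)}(m_i)-1$, and the next starts at $g_i^{(n)}+1$. AoI: $\Delta_i(t)=t-T_i(t)$ where $T_i(t)$ is the sensing start time of the freshest sample of node $i$ delivered to the base by time $t$; $\bar{\Delta}_i(\pi)=\limsup_{T\to\infty}\frac1T\sum_{t<T}\Delta_i(t)$ and $\bar{\Delta}_{\mathrm{avg}}(\pi)=\frac{1}{|V_{\mathrm{s}}|}\sum_i\bar{\Delta}_i(\pi)$. Admissible policies are (possibly randomized, history-dependent) control rules respecting the motion, sensing and gossip constraints. A shortest-path tree $T=(V,E_T)$ rooted at $0$ is a spanning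 tree of $G$ in which the depth of each node equals $d_i$; $p(i)$ denotes the parent of $i\in V_{\mathrm{s}}$ in $T$. Full-conveyor coverage on $T$: (1) for every $i\in V_{\mathrm{s}}$ and every slot $t$, some conveyor is at $i$ at time $t$ and moves from $i$ to $p(i)$ in the transition from $t$ to $t+1$; (2) whenever an attempt at node $i$ completes at time $g_i^{(n)}$, the new sample is in slot $g_i^{(n)}$ transferred by gossip to a baseward conveyor co-located at $i$, which from time $g_i^{(n)}$ carries it along the unique $T$-path from $i$ to $0$, one hop per slot, never handing it off or waiting, until delivery at the base; (3) every conveyor moves along $T$ at unit speed and never waits (traverses exactly one edge of $T$ each slot). *)

theory Defs
  imports "HOL-Probability.Probability"
begin

definition walk_to :: "('v \<Rightarrow> 'v \<Rightarrow> bool) \<Rightarrow> 'v \<Rightarrow> 'v \<Rightarrow> nat \<Rightarrow> bool" where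
  "walk_to E x y n \<longleftrightarrow> (\<exists>w. w 0 = x \<and> w n = y \<and> (\<forall>j<n. E (w j) (w (Suc j))))"

definition graph_ok :: "'v set \<Rightarrow> ('v \<Rightarrow> 'v \<Rightarrow> bool) \<Rightarrow> 'v \<Rightarrow> bool" where
  "graph_ok V E base \<longleftrightarrow> finite V \<and> base \<in> V
     \<and> (\<forall>x y. E x y \<longrightarrow> x \<in> V \<and> y \<in> V)
     \<and> (\<forall>x y. E x y \<longrightarrow> E y x) \<and> (\<forall>x. \<not> E x x)
     \<and> (\<forall>x\<in>V. \<exists>n. walk_to E x base n)"

definition hop_dist :: "('v \<Rightarrow> 'v \<Rightarrow> bool) \<Rightarrow> 'v \<Rightarrow> 'v \<Rightarrow> nat" where
  "hop_dist E base i = (LEAST n. walk_to E i base n)"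

text \<open>Shortest-path tree rooted at base, given by its parent map par: every non-base node
  has a parent which is a G-neighbour at hop distance one less (so the depth of each node in T
  equals its hop distance).\<close>
definition spt :: "'v set \<Rightarrow> ('v \<Rightarrow> 'v \<Rightarrow> bool) \<Rightarrow> 'v \<Rightarrow> ('v \<Rightarrow> 'v) \<Rightarrow> bool" where
  "spt V E base par \<longleftrightarrow> (\<forall>i\<in>V - {base}. par i \<in> V \<and> E i (par i)
       \<and> hop_dist E base (par i) + 1 = hop_dist E base i)"

definition tree_edge :: "'v set \<Rightarrow> 'v \<Rightarrow> ('v \<Rightarrow> 'v) \<Rightarrow> 'v \<Rightarrow> 'v \<Rightarrow> bool" where
  "tree_edge V base par x y \<longleftrightarrow>
     (x \<in> V - {base} \<and> y = par x) \<or> (y \<in> V - {base} \<and> x = par y)"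

definition geometric_rv :: "'a measure \<Rightarrow> ('a \<Rightarrow> nat) \<Rightarrow> real \<Rightarrow> bool" where
  "geometric_rv M X mu \<longleftrightarrow> X \<in> measurable M (count_space UNIV)
     \<and> (\<forall>k\<ge>1. measure M {\<omega>\<in>space M. X \<omega> = k} = (1 - 1/mu) ^ (k - 1) * (1/mu))"

text \<open>Attempts at a node (indexed from 0): the first starts at s0, the next starts one slot after
  the completion of the previous one (work-conserving).\<close>
fun att_start :: "nat \<Rightarrow> (nat \<Rightarrow> nat) \<Rightarrow> nat \<Rightarrow> nat" where
  "att_start s0 dur 0 = s0"
| "att_start s0 dur (Suc n) = att_start s0 dur n + dur n"

definition att_done :: "nat \<Rightarrow> (nat \<Rightarrow> nat) \<Rightarrow> nat \<Rightarrow> nat" where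
  "att_done s0 dur n = att_start s0 dur n + dur n - 1"

text \<open>pos k t: position of robot k at slot t; role k = Some i: static sensing robot of node i,
  role k = None: conveyor; hold k t i = Some n: robot k stores (after gossip in slot t) the n-th
  sample of origin i; sstart i: start slot of the first sensing attempt at i.\<close>
record 'v traj =
  pos :: "nat \<Rightarrow> nat \<Rightarrow> 'v"
  role :: "nat \<Rightarrow> 'v option"
  hold :: "nat \<Rightarrow> nat \<Rightarrow> 'v \<Rightarrow> nat option"
  sstart :: "'v \<Rightarrow> nat"

definition admissible ::
  "'v set \<Rightarrow> ('v \<Rightarrow> 'v \<Rightarrow> bool) \<Rightarrow> 'v \<Rightarrow> nat \<Rightarrow> ('v \<Rightarrow> nat) \<Rightarrow> ('v \<Rightarrow> nat \<Rightarrow> nat) \<Rightarrow> 'v traj \<Rightarrow> bool" where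
  "admissible V E base N m dur tr \<longleftrightarrow>
     \<comment> \<open>sensing allocation\<close>
     (\<forall>i\<in>V - {base}. card {k. k < N \<and> role tr k = Some i} = m i)
   \<and> (\<forall>k<N. \<forall>i. role tr k = Some i \<longrightarrow> i \<in> V - {base})
     \<comment> \<open>motion\<close>
   \<and> (\<forall>k<N. pos tr k 0 = base)
   \<and> (\<forall>k<N. \<forall>t. pos tr k t \<in> V)
   \<and> (\<forall>k<N. \<forall>t. pos tr k (Suc t) = pos tr k t \<or> E (pos tr k t) (pos tr k (Suc t)))
     \<comment> \<open>sensing robots are static at their node once sensing has started\<close>
   \<and> (\<forall>k<N. \<forall>i. role tr k = Some i \<longrightarrow> (\<forall>t\<ge>sstart tr i. pos tr k t = i))
     \<comment> \<open>a stored sample was either obtained at its origin after completion, or by gossip from a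
        co-located robot (possibly itself) that stored it in the previous slot\<close>
   \<and> (\<forall>k<N. \<forall>t i n. hold tr k t i = Some n \<longrightarrow> i \<in> V - {base} \<and>
        ((pos tr k t = i \<and> att_done (sstart tr i) (dur i) n \<le> t)
         \<or> (\<exists>k'<N. 0 < t \<and> pos tr k' t = pos tr k t \<and> hold tr k' (t - 1) i = Some n)))
     \<comment> \<open>robots keep the most recent sample per origin\<close>
   \<and> (\<forall>k<N. \<forall>t i n. hold tr k t i = Some n \<longrightarrow> (\<exists>n'\<ge>n. hold tr k (Suc t) i = Some n'))"

definition full_conveyor ::
  "'v set \<Rightarrow> ('v \<Rightarrow> 'v \<Rightarrow> bool) \<Rightarrow> 'v \<Rightarrow> nat \<Rightarrow> ('v \<Rightarrow> 'v) \<Rightarrow> ('v \<Rightarrow> nat \<Rightarrow> nat) \<Rightarrow> 'v traj \<Rightarrow> bool" where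
  "full_conveyor V E base N par dur tr \<longleftrightarrow> (\<exists>t0.
     (\<forall>i\<in>V - {base}. \<forall>t\<ge>t0. \<exists>k<N. role tr k = None \<and> pos tr k t = i \<and> pos tr k (Suc t) = par i)
   \<and> (\<forall>i\<in>V - {base}. \<forall>n. t0 \<le> att_done (sstart tr i) (dur i) n \<longrightarrow>
        (\<exists>k<N. role tr k = None \<and>
           (\<forall>j\<le>hop_dist E base i.
              pos tr k (att_done (sstart tr i) (dur i) n + j) = (par ^^ j) i
            \<and> hold tr k (att_done (sstart tr i) (dur i) n + j) i = Some n)))
   \<and> (\<forall>k<N. role tr k = None \<longrightarrow> (\<forall>t\<ge>t0. tree_edge V base par (pos tr k t) (pos tr k (Suc t)))))"

text \<open>Sensing start time of the freshest sample of i delivered to the base by slot t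
  (0 if none delivered yet).\<close>
definition fresh_start :: "'v \<Rightarrow> nat \<Rightarrow> ('v \<Rightarrow> nat \<Rightarrow> nat) \<Rightarrow> 'v traj \<Rightarrow> 'v \<Rightarrow> nat \<Rightarrow> nat" where
  "fresh_start base N dur tr i t =
     (let D = {n. \<exists>k<N. \<exists>s\<le>t. pos tr k s = base \<and> hold tr k s i = Some n}
      in if D = {} then 0 else Max (att_start (sstart tr i) (dur i) ` D))"

definition aoi :: "'v \<Rightarrow> nat \<Rightarrow> ('v \<Rightarrow> nat \<Rightarrow> nat) \<Rightarrow> 'v traj \<Rightarrow> 'v \<Rightarrow> nat \<Rightarrow> real" where
  "aoi base N dur tr i t = real t - real (fresh_start base N dur tr i t)"

definition avg_aoi_node :: "'v \<Rightarrow> nat \<Rightarrow> ('v \<Rightarrow> nat \<Rightarrow> nat) \<Rightarrow> 'v traj \<Rightarrow> 'v \<Rightarrow> ereal" where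
  "avg_aoi_node base N dur tr i =
     limsup (\<lambda>T. ereal ((\<Sum>t<T. aoi base N dur tr i t) / real T))"

definition avg_aoi :: "'v set \<Rightarrow> 'v \<Rightarrow> nat \<Rightarrow> ('v \<Rightarrow> nat \<Rightarrow> nat) \<Rightarrow> 'v traj \<Rightarrow> ereal" where
  "avg_aoi V base N dur tr =
     ereal (1 / real (card (V - {base}))) * (\<Sum>i\<in>V - {base}. avg_aoi_node base N dur tr i)"

end

theory Submission
  imports Defs
begin

text \<open>A sample of node \<open>i\<close> travels with robots, so it cannot reach the base earlier than
  \<open>d\<^sub>i\<close> slots after its sensing attempt completes. Hence, under every admissible policy, the
  freshest delivered sample is never fresher than under the ideal schedule in which each sample
  arrives exactly \<open>d\<^sub>i\<close> slots after completion, and full-conveyor coverage realises this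
  schedule from some slot on. Under the ideal schedule the age is a sawtooth; the area under it
  between consecutive deliveries is a quadratic function of two consecutive sensing durations.
  These areas form a one-dependent sequence, so a strong law (Chebyshev along the squares,
  Borel-Cantelli, and a sandwich between consecutive squares) shows that almost surely the area
  per delivery averages \<open>2 \<mu>\<^sup>2 + (d\<^sub>i - 2) \<mu>\<close> and the delivery interval averages \<open>\<mu>\<close>,
  for geometric durations of mean \<open>\<mu> = \<mu>\<^sub>i(m\<^sub>i)\<close>. The average age is the quotient
  \<open>2 \<mu> - 2 + d\<^sub>i\<close>.\<close>

section \<open>Averages along sparse subsequences\<close>

definition block_index :: "(nat \<Rightarrow> nat) \<Rightarrow> nat \<Rightarrow> nat" where
  "block_index T t = (LEAST n. t < T (Suc n))"

context
  fixes T :: "nat \<Rightarrow> nat"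
  assumes T: "strict_mono T"
begin

lemma less_block_index_Suc: "t < T (Suc (block_index T t))"
proof -
  have "t < T (Suc t)" using strict_mono_imp_increasing[OF T, of "Suc t"] by simp
  then show ?thesis unfolding block_index_def by (rule LeastI)
qed

lemma block_index_le: "T 0 \<le> t \<Longrightarrow> T (block_index T t) \<le> t"
proof (cases "block_index T t")
  case (Suc k)
  then have "\<not> t < T (Suc k)" unfolding block_index_def by (metis lessI not_less_Least)
  then show ?thesis using Suc by simp
qed simp

lemma le_block_index_iff:
  assumes "T 0 \<le> t" shows "T n \<le> t \<longleftrightarrow> n \<le> block_index T t"
proof
  assume "T n \<le> t"
  then have "T n < T (Suc (block_index T t))" using less_block_index_Suc[of t] by simp
  then show "n \<le> block_index T t" using T by (simp add: strict_mono_less)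
next
  assume "n \<le> block_index T t"
  then show "T n \<le> t"
    using block_index_le[OF assms] T by (meson order_trans strict_mono_less_eq)
qed

lemma block_index_eqI:
  assumes "T N \<le> t" "t < T (Suc N)" shows "block_index T t = N"
proof -
  have "T 0 \<le> t" using assms(1) T by (meson le0 order_trans strict_mono_less_eq)
  then show ?thesis using le_block_index_iff[of t N] le_block_index_iff[of t "Suc N"] assms by simp
qed

lemma filterlim_block_index: "filterlim (block_index T) at_top at_top"
  unfolding filterlim_at_top eventually_at_top_linorder
proof (intro allI exI impI)
  fix Z t assume "T Z \<le> t"
  then show "Z \<le> block_index T t"
    using le_block_index_iff T by (meson le0 order_trans strict_mono_less_eq)
qed

end

lemma LIMSEQ_ratio_of_subsequence:
  fixes f :: "nat \<Rightarrow> real" and T :: "nat \<Rightarrow> nat"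
  assumes f: "mono f" "\<And>t. 0 \<le> f t" and T: "strict_mono T" "0 < T 0"
    and lim: "(\<lambda>N. f (T N) / T N) \<longlonglongrightarrow> L"
    and ratio: "(\<lambda>N. real (T (Suc N)) / T N) \<longlonglongrightarrow> 1"
  shows "(\<lambda>t. f t / t) \<longlonglongrightarrow> L"
proof -
  let ?N = "block_index T"
  have T_pos: "0 < T n" for n using T strict_mono_less_eq[OF T(1), of 0 n] by simp
  have ratio': "(\<lambda>N. real (T N) / T (Suc N)) \<longlonglongrightarrow> 1"
    using tendsto_inverse[OF ratio] by (simp add: inverse_eq_divide)
  define lower where "lower N = f (T N) / T N * (real (T N) / T (Suc N))" for N
  define upper where "upper N = f (T (Suc N)) / T (Suc N) * (real (T (Suc N)) / T N)" for N
  have "lower \<longlonglongrightarrow> L" unfolding lower_def using tendsto_mult[OF lim ratio'] by simp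
  then have lower: "(\<lambda>t. lower (?N t)) \<longlonglongrightarrow> L"
    using filterlim_compose filterlim_block_index[OF T(1)] by blast
  have "upper \<longlonglongrightarrow> L" unfolding upper_def using tendsto_mult[OF LIMSEQ_Suc[OF lim] ratio] by simp
  then have upper: "(\<lambda>t. upper (?N t)) \<longlonglongrightarrow> L"
    using filterlim_compose filterlim_block_index[OF T(1)] by blast
  have bounds: "lower (?N t) \<le> f t / t \<and> f t / t \<le> upper (?N t)" if t: "T 0 \<le> t" for t
  proof
    have t_pos: "0 < t" using t T(2) by simp
    have below: "T (?N t) \<le> t" and above: "t < T (Suc (?N t))"
      using block_index_le[OF T(1) t] less_block_index_Suc[OF T(1)] by auto
    have "lower (?N t) = f (T (?N t)) / T (Suc (?N t))" unfolding lower_def using T_pos[of "?N t"] by simp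
    also have "\<dots> \<le> f t / T (Suc (?N t))"
      using monoD[OF f(1) below] T_pos by (simp add: divide_right_mono)
    also have "\<dots> \<le> f t / t" using above t_pos f(2) by (intro divide_left_mono) auto
    finally show "lower (?N t) \<le> f t / t" .
    have "f t / t \<le> f (T (Suc (?N t))) / t"
      using monoD[OF f(1), of t "T (Suc (?N t))"] above t_pos by (simp add: divide_right_mono)
    also have "\<dots> \<le> f (T (Suc (?N t))) / T (?N t)"
      using below T_pos[of "?N t"] f(2) by (intro divide_left_mono) auto
    also have "\<dots> = upper (?N t)" unfolding upper_def using T_pos[of "Suc (?N t)"] by simp
    finally show "f t / t \<le> upper (?N t)" .
  qed
  show ?thesis
    by (rule tendsto_sandwich[OF _ _ lower upper]) (use bounds in \<open>auto simp: eventually_sequentially\<close>)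
qed

lemma LIMSEQ_avg_of_LIMSEQ_avg_squares:
  fixes y :: "nat \<Rightarrow> real"
  assumes nonneg: "\<And>j. 0 \<le> y j" and lim: "(\<lambda>k. (\<Sum>j<k ^ 2. y j) / k ^ 2) \<longlonglongrightarrow> c"
  shows "(\<lambda>n. (\<Sum>j<n. y j) / n) \<longlonglongrightarrow> c"
proof (rule LIMSEQ_ratio_of_subsequence[where T = "\<lambda>N. (Suc N) ^ 2"])
  show "mono (\<lambda>n. \<Sum>j<n. y j)" using nonneg by (intro monoI sum_mono2) auto
  show "0 \<le> (\<Sum>j<n. y j)" for n using nonneg by (intro sum_nonneg) auto
  show "strict_mono (\<lambda>N. (Suc N) ^ 2)" by (rule strict_monoI) (simp add: power_strict_mono)
  show "(\<lambda>N. (\<Sum>j<(Suc N) ^ 2. y j) / real ((Suc N) ^ 2)) \<longlonglongrightarrow> c"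
    using LIMSEQ_Suc[OF lim] by simp
  have "(\<lambda>N. (real (Suc (Suc N)) / real (Suc N)) ^ 2) \<longlonglongrightarrow> 1 ^ 2"
    using LIMSEQ_Suc[OF LIMSEQ_Suc_n_over_n] by (intro tendsto_power) simp
  then show "(\<lambda>N. real ((Suc (Suc N)) ^ 2) / real ((Suc N) ^ 2)) \<longlonglongrightarrow> 1"
    by (simp add: power_divide)
qed simp

lemma AE_LIMSEQ_0_if_eventually_less:
  fixes f :: "nat \<Rightarrow> 'a \<Rightarrow> real"
  assumes "\<And>e. 0 < e \<Longrightarrow> AE \<omega> in M. eventually (\<lambda>k. \<bar>f k \<omega>\<bar> < e) sequentially"
  shows "AE \<omega> in M. (\<lambda>k. f k \<omega>) \<longlonglongrightarrow> 0"
proof -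
  have "AE \<omega> in M. \<forall>r::nat. eventually (\<lambda>k. \<bar>f k \<omega>\<bar> < inverse (Suc r)) sequentially"
    using assms by (subst AE_all_countable) simp
  then show ?thesis
  proof (rule AE_mp, intro AE_I2 impI)
    fix \<omega> assume small: "\<forall>r::nat. eventually (\<lambda>k. \<bar>f k \<omega>\<bar> < inverse (Suc r)) sequentially"
    show "(\<lambda>k. f k \<omega>) \<longlonglongrightarrow> 0"
      unfolding tendsto_iff dist_real_def
    proof (intro allI impI)
      fix e :: real assume "0 < e"
      then obtain r where "inverse (real (Suc r)) < e" using reals_Archimedean by blast
      then show "eventually (\<lambda>k. \<bar>f k \<omega> - 0\<bar> < e) sequentially"
        using small[rule_format, of r] by (auto elim: eventually_mono)
    qed
  qed
qed

lemma LIMSEQ_avg_eventually_eq: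
  fixes f g :: "nat \<Rightarrow> real"
  assumes eq: "\<And>t. t1 \<le> t \<Longrightarrow> f t = g t" and lim: "(\<lambda>T. (\<Sum>t<T. g t) / T) \<longlonglongrightarrow> L"
  shows "(\<lambda>T. (\<Sum>t<T. f t) / T) \<longlonglongrightarrow> L"
proof -
  define K where "K = (\<Sum>t<t1. f t - g t)"
  have "(\<lambda>T. (\<Sum>t<T. g t) / T + K / T) \<longlonglongrightarrow> L + 0"
    by (intro tendsto_add lim lim_const_over_n)
  moreover have split: "(\<Sum>t<T. f t) = (\<Sum>t<T. g t) + K" if "t1 \<le> T" for T
  proof -
    have "(\<Sum>t<T. f t - g t) = K"
      unfolding K_def using that eq by (intro sum.mono_neutral_right) auto
    then show ?thesis by (simp add: sum_subtractf)
  qed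
  moreover have "\<forall>\<^sub>F T in sequentially. (\<Sum>t<T. g t) / T + K / T = (\<Sum>t<T. f t) / T"
    using eventually_ge_at_top[of t1] by eventually_elim (simp add: split add_divide_distrib)
  ultimately show ?thesis using Lim_transform_eventually by fastforce
qed

section \<open>The age of information under ideal delivery\<close>

lemma att_start_eq_sum: "att_start s dur n = s + (\<Sum>j<n. dur j)"
  by (induction n) auto

lemma sum_of_nat_lessThan: "(\<Sum>u<n. real u) = real n * (real n - 1) / 2"
  by (induction n) (auto simp: field_simps)

definition delivery_time :: "nat \<Rightarrow> (nat \<Rightarrow> nat) \<Rightarrow> nat \<Rightarrow> nat \<Rightarrow> nat" where
  "delivery_time s dur d n = att_done s dur n + d"

text \<open>The schedule in which every sample is delivered exactly \<open>d\<close> slots after its completion;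
  no admissible policy delivers earlier.\<close>
definition ideal_fresh_start :: "nat \<Rightarrow> (nat \<Rightarrow> nat) \<Rightarrow> nat \<Rightarrow> nat \<Rightarrow> nat" where
  "ideal_fresh_start s dur d t =
     (if delivery_time s dur d 0 \<le> t then att_start s dur (block_index (delivery_time s dur d) t) else 0)"

definition ideal_age :: "nat \<Rightarrow> (nat \<Rightarrow> nat) \<Rightarrow> nat \<Rightarrow> nat \<Rightarrow> real" where
  "ideal_age s dur d t = real t - real (ideal_fresh_start s dur d t)"

text \<open>Area under the ideal age between two consecutive deliveries, \<open>b\<close> slots apart, when the
  sample delivered first took \<open>a\<close> slots to sense: the age restarts at \<open>a + d - 1\<close>.\<close>
definition block_area :: "nat \<Rightarrow> nat \<Rightarrow> nat \<Rightarrow> real" where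
  "block_area d a b = real b * (real a + real d - 1) + real b * (real b - 1) / 2"

definition regular_durations :: "real \<Rightarrow> nat \<Rightarrow> (nat \<Rightarrow> nat) \<Rightarrow> bool" where
  "regular_durations mu d dur \<longleftrightarrow>
     (\<lambda>n. (\<Sum>j<n. real (dur j)) / n) \<longlonglongrightarrow> mu
   \<and> (\<lambda>n. (\<Sum>j<n. block_area d (dur j) (dur (Suc j))) / n) \<longlonglongrightarrow> 2 * mu ^ 2 + (real d - 2) * mu"

lemma block_area_nonneg: "1 \<le> d \<Longrightarrow> 0 \<le> block_area d a b"
  by (cases b) (auto simp: block_area_def)

lemma block_area_le: "1 \<le> d \<Longrightarrow> block_area d a b \<le> (real d + 1) * (real a + 1) * (real b + 1) ^ 2"
proof -
  assume d: "1 \<le> d"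
  have "0 \<le> real a * (real d - 1)" using d by simp
  then have "real a + real d - 1 \<le> (real a + 1) * real d" by (simp add: algebra_simps)
  then have "real b * (real a + real d - 1) \<le> (real b + 1) ^ 2 * ((real a + 1) * real d)"
    using d by (intro mult_mono) (auto simp: power2_eq_square algebra_simps)
  moreover have "real b * (real b - 1) / 2 \<le> (real b + 1) ^ 2 * (real a + 1)"
    by (rule order_trans[of _ "(real b + 1) ^ 2"]) (auto simp: power2_eq_square algebra_simps)
  ultimately have "block_area d a b \<le> (real b + 1) ^ 2 * ((real a + 1) * real d) + (real b + 1) ^ 2 * (real a + 1)"
    unfolding block_area_def by (rule add_mono)
  then show ?thesis by (simp add: algebra_simps)
qed

locale delivery_schedule =
  fixes s :: nat and dur :: "nat \<Rightarrow> nat" and d :: nat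
  assumes dur_pos: "\<And>j. 1 \<le> dur j" and latency_pos: "1 \<le> d"
begin

abbreviation "deliv \<equiv> delivery_time s dur d"

lemma delivery_time_Suc: "deliv (Suc n) = deliv n + dur (Suc n)"
  using dur_pos[of n] dur_pos[of "Suc n"] by (simp add: delivery_time_def att_done_def)

lemma delivery_time_eq: "real (deliv n) = real (att_start s dur n) + real (dur n) - 1 + real d"
  using dur_pos[of n] by (simp add: delivery_time_def att_done_def of_nat_diff)

lemma strict_mono_delivery_time: "strict_mono deliv"
proof (rule strict_monoI_Suc)
  show "deliv n < deliv (Suc n)" for n using dur_pos[of "Suc n"] by (simp add: delivery_time_Suc)
qed

lemma delivery_time_pos: "0 < deliv n"
  using latency_pos by (simp add: delivery_time_def)

lemma att_start_le_delivery_time: "att_start s dur n \<le> deliv n"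
  using dur_pos[of n] by (simp add: delivery_time_def att_done_def)

lemma mono_att_start: "mono (att_start s dur)"
  by (intro monoI) (simp add: att_start_eq_sum sum_mono2)

lemma le_att_done: "n \<le> att_done s dur n"
proof -
  have "n \<le> (\<Sum>j<n. dur j)" using sum_mono[of "{..<n}" "\<lambda>_. 1" dur] dur_pos by simp
  then show ?thesis using dur_pos[of n] by (simp add: att_done_def att_start_eq_sum)
qed

lemma ideal_age_nonneg: "0 \<le> ideal_age s dur d t"
  using att_start_le_delivery_time block_index_le[OF strict_mono_delivery_time]
  by (force simp: ideal_age_def ideal_fresh_start_def intro: order_trans)

lemma ideal_age_block:
  "t \<in> {deliv N..<deliv (Suc N)} \<Longrightarrow> ideal_age s dur d t = real t - real (att_start s dur N)"
  using block_index_eqI[OF strict_mono_delivery_time, of N t]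
    strict_mono_less_eq[OF strict_mono_delivery_time, of 0 N]
  by (auto simp: ideal_age_def ideal_fresh_start_def)

lemma sum_ideal_age_delivery_time_Suc:
  "(\<Sum>t<deliv (Suc N). ideal_age s dur d t)
     = (\<Sum>t<deliv N. ideal_age s dur d t) + block_area d (dur N) (dur (Suc N))"
proof -
  have "(\<Sum>t\<in>{deliv N..<deliv (Suc N)}. ideal_age s dur d t)
      = (\<Sum>t\<in>{deliv N..<deliv (Suc N)}. real t - real (att_start s dur N))"
    by (rule sum.cong) (simp_all add: ideal_age_block)
  also have "\<dots> = (\<Sum>u<dur (Suc N). real (u + deliv N) - real (att_start s dur N))"
    using sum.shift_bounds_nat_ivl[of "\<lambda>t. real t - real (att_start s dur N)" 0 "deliv N" "dur (Suc N)"]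
    by (simp add: delivery_time_Suc atLeast0LessThan add.commute)
  also have "\<dots> = (\<Sum>u<dur (Suc N). real u + (real (dur N) - 1 + real d))"
    by (simp add: delivery_time_eq algebra_simps)
  also have "\<dots> = (\<Sum>u<dur (Suc N). real u) + real (dur (Suc N)) * (real (dur N) - 1 + real d)"
    by (simp add: sum.distrib)
  also have "\<dots> = block_area d (dur N) (dur (Suc N))"
    by (simp add: sum_of_nat_lessThan block_area_def algebra_simps)
  finally show ?thesis
    using sum.atLeastLessThan_concat[of 0 "deliv N" "deliv (Suc N)" "ideal_age s dur d"]
    by (simp add: delivery_time_Suc atLeast0LessThan)
qed

lemma sum_ideal_age_delivery_time:
  "(\<Sum>t<deliv N. ideal_age s dur d t)
     = (\<Sum>t<deliv 0. ideal_age s dur d t) + (\<Sum>n<N. block_area d (dur n) (dur (Suc n)))"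
  by (induction N) (simp_all add: sum_ideal_age_delivery_time_Suc)

lemma delivery_time_eq_sum: "real (deliv N) = real s + real d - 1 + (\<Sum>j<Suc N. real (dur j))"
  using delivery_time_eq[of N] by (simp add: att_start_eq_sum)

context
  fixes mu :: real
  assumes mean: "(\<lambda>n. (\<Sum>j<n. real (dur j)) / n) \<longlonglongrightarrow> mu"
begin

lemma mean_duration_ge_1: "1 \<le> mu"
proof (rule LIMSEQ_le_const[OF mean], intro exI allI impI)
  fix n :: nat assume "1 \<le> n"
  then show "1 \<le> (\<Sum>j<n. real (dur j)) / n"
    using sum_mono[of "{..<n}" "\<lambda>_. 1::real" "\<lambda>j. real (dur j)"] dur_pos by simp
qed

lemma delivery_time_avg_tendsto: "(\<lambda>N. real (deliv N) / N) \<longlonglongrightarrow> mu"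
proof -
  have "(\<lambda>N. (real s + real d - 1) / N + (\<Sum>j<Suc N. real (dur j)) / Suc N * (Suc N / N))
      \<longlonglongrightarrow> 0 + mu * 1"
    by (intro tendsto_add tendsto_mult lim_const_over_n LIMSEQ_Suc[OF mean] LIMSEQ_Suc_n_over_n)
  moreover have "\<forall>\<^sub>F N in sequentially.
      (real s + real d - 1) / N + (\<Sum>j<Suc N. real (dur j)) / Suc N * (Suc N / N) = real (deliv N) / N"
    using eventually_gt_at_top[of 0]
  proof eventually_elim
    case (elim N)
    have "(\<Sum>j<Suc N. real (dur j)) / Suc N * (Suc N / N) = (\<Sum>j<Suc N. real (dur j)) / N" by simp
    then show ?case by (simp add: delivery_time_eq_sum add_divide_distrib)
  qed
  ultimately show ?thesis using Lim_transform_eventually by fastforce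
qed

lemma sum_ideal_age_delivery_time_avg_tendsto:
  assumes area: "(\<lambda>n. (\<Sum>j<n. block_area d (dur j) (dur (Suc j))) / n) \<longlonglongrightarrow> 2 * mu ^ 2 + (real d - 2) * mu"
  shows "(\<lambda>N. (\<Sum>t<deliv N. ideal_age s dur d t) / N) \<longlonglongrightarrow> 2 * mu ^ 2 + (real d - 2) * mu"
proof -
  have "(\<lambda>N. (\<Sum>t<deliv 0. ideal_age s dur d t) / N + (\<Sum>n<N. block_area d (dur n) (dur (Suc n))) / N)
      \<longlonglongrightarrow> 0 + (2 * mu ^ 2 + (real d - 2) * mu)"
    by (intro tendsto_add lim_const_over_n area)
  moreover have "(\<Sum>t<deliv N. ideal_age s dur d t) / N
      = (\<Sum>t<deliv 0. ideal_age s dur d t) / N + (\<Sum>n<N. block_area d (dur n) (dur (Suc n))) / N" for N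
    by (subst sum_ideal_age_delivery_time) (simp add: add_divide_distrib)
  ultimately show ?thesis by (simp only: add_0_left)
qed

lemma ideal_age_avg_tendsto:
  assumes area: "(\<lambda>n. (\<Sum>j<n. block_area d (dur j) (dur (Suc j))) / n) \<longlonglongrightarrow> 2 * mu ^ 2 + (real d - 2) * mu"
  shows "(\<lambda>t. (\<Sum>u<t. ideal_age s dur d u) / t) \<longlonglongrightarrow> 2 * mu + real d - 2"
proof (rule LIMSEQ_ratio_of_subsequence[OF _ _ strict_mono_delivery_time delivery_time_pos])
  have mu_pos: "0 < mu" using mean_duration_ge_1 by simp
  show "mono (\<lambda>t. \<Sum>u<t. ideal_age s dur d u)"
    by (intro monoI sum_mono2) (auto simp: ideal_age_nonneg)
  show "0 \<le> (\<Sum>u<t. ideal_age s dur d u)" for t by (intro sum_nonneg ideal_age_nonneg)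
  have "(\<lambda>N. (\<Sum>t<deliv N. ideal_age s dur d t) / N / (real (deliv N) / N))
      \<longlonglongrightarrow> (2 * mu ^ 2 + (real d - 2) * mu) / mu"
    using mu_pos by (intro tendsto_divide sum_ideal_age_delivery_time_avg_tendsto[OF area]
        delivery_time_avg_tendsto) simp
  moreover have "(2 * mu ^ 2 + (real d - 2) * mu) / mu = 2 * mu + real d - 2"
    using mu_pos by (simp add: field_simps power2_eq_square)
  moreover have "\<forall>\<^sub>F N in sequentially.
      (\<Sum>t<deliv N. ideal_age s dur d t) / N / (real (deliv N) / N) = (\<Sum>t<deliv N. ideal_age s dur d t) / deliv N"
    using eventually_gt_at_top[of 0] by eventually_elim simp
  ultimately show "(\<lambda>N. (\<Sum>t<deliv N. ideal_age s dur d t) / deliv N) \<longlonglongrightarrow> 2 * mu + real d - 2"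
    using Lim_transform_eventually by fastforce
  have "(\<lambda>N. real (deliv (Suc N)) / Suc N * (Suc N / N) / (real (deliv N) / N)) \<longlonglongrightarrow> mu * 1 / mu"
    using mu_pos by (intro tendsto_divide tendsto_mult LIMSEQ_Suc[OF delivery_time_avg_tendsto]
        LIMSEQ_Suc_n_over_n delivery_time_avg_tendsto) auto
  moreover have "\<forall>\<^sub>F N in sequentially.
      real (deliv (Suc N)) / Suc N * (Suc N / N) / (real (deliv N) / N) = real (deliv (Suc N)) / deliv N"
    using eventually_gt_at_top[of 0] by eventually_elim simp
  ultimately show "(\<lambda>N. real (deliv (Suc N)) / deliv N) \<longlonglongrightarrow> 1"
    using mu_pos Lim_transform_eventually by fastforce
qed

end

end

section \<open>A strong law for one-dependent sequences\<close>

context prob_space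
begin

lemma nn_integral_indep_pair:
  fixes X :: "nat \<Rightarrow> 'a \<Rightarrow> nat" and pk :: "nat \<Rightarrow> real" and h :: "nat \<Rightarrow> nat \<Rightarrow> ennreal"
  assumes ind: "indep_vars (\<lambda>_. count_space UNIV) X UNIV"
    and pk: "\<And>j k. prob {\<omega>\<in>space M. X j \<omega> = k} = pk k"
    and "j \<noteq> l"
  shows "(\<integral>\<^sup>+\<omega>. h (X j \<omega>) (X l \<omega>) \<partial>M) = (\<Sum>a. \<Sum>b. h a b * ennreal (pk a * pk b))"
proof -
  have [measurable]: "X i \<in> measurable M (count_space UNIV)" for i
    using ind by (auto simp: indep_vars_def)
  define A where "A a b = {\<omega>\<in>space M. X j \<omega> = a \<and> X l \<omega> = b}" for a b
  have [measurable]: "A a b \<in> sets M" for a b unfolding A_def by measurable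
  have emeasure_A: "emeasure M (A a b) = ennreal (pk a * pk b)" for a b
  proof -
    define B where "B i = (if i = j then {a} else {b})" for i
    have "prob (\<Inter>i\<in>{j, l}. X i -` B i \<inter> space M) = (\<Prod>i\<in>{j, l}. prob (X i -` B i \<inter> space M))"
      by (rule indep_varsD[OF ind]) auto
    moreover have "(\<Inter>i\<in>{j, l}. X i -` B i \<inter> space M) = A a b"
      using \<open>j \<noteq> l\<close> by (auto simp: A_def B_def)
    ultimately have "prob (A a b) = pk a * pk b"
      using \<open>j \<noteq> l\<close> pk by (simp add: B_def vimage_def Int_def conj_commute)
    then show ?thesis by (simp add: emeasure_eq_measure)
  qed
  have split: "h (X j \<omega>) (X l \<omega>) = (\<Sum>a. \<Sum>b. h a b * indicator (A a b) \<omega>)" if "\<omega> \<in> space M" for \<omega>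
  proof -
    have "(\<Sum>b. h a b * indicator (A a b) \<omega>) = (if a = X j \<omega> then h a (X l \<omega>) else 0)" for a
      using suminf_finite[of "{X l \<omega>}" "\<lambda>b. h a b * indicator (A a b) \<omega>"] that
      by (auto simp: A_def indicator_def)
    then show ?thesis
      using suminf_finite[of "{X j \<omega>}" "\<lambda>a. if a = X j \<omega> then h a (X l \<omega>) else 0"] by simp
  qed
  have "(\<integral>\<^sup>+\<omega>. h (X j \<omega>) (X l \<omega>) \<partial>M) = (\<integral>\<^sup>+\<omega>. (\<Sum>a. \<Sum>b. h a b * indicator (A a b) \<omega>) \<partial>M)"
    by (rule nn_integral_cong) (simp add: split)
  also have "\<dots> = (\<Sum>a. \<Sum>b. \<integral>\<^sup>+\<omega>. h a b * indicator (A a b) \<omega> \<partial>M)"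
    by (simp add: nn_integral_suminf)
  also have "\<dots> = (\<Sum>a. \<Sum>b. h a b * ennreal (pk a * pk b))"
    by (simp add: nn_integral_cmult_indicator emeasure_A)
  finally show ?thesis .
qed

lemma indep_var_disjoint_pairs:
  fixes X :: "nat \<Rightarrow> 'a \<Rightarrow> nat" and G H :: "nat \<Rightarrow> nat \<Rightarrow> real"
  assumes ind: "indep_vars (\<lambda>_. count_space UNIV) X UNIV"
    and disj: "{j, j'} \<inter> {l, l'} = {}"
  shows "indep_var borel (\<lambda>\<omega>. G (X j \<omega>) (X j' \<omega>)) borel (\<lambda>\<omega>. H (X l \<omega>) (X l' \<omega>))"
proof -
  define K where "K = case_bool {j, j'} {l, l'}"
  define Y where "Y = case_bool (\<lambda>v. G (v j) (v j')) (\<lambda>v. H (v l) (v l'))"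
  have "indep_vars (\<lambda>b. PiM (K b) (\<lambda>_. count_space UNIV)) (\<lambda>b \<omega>. restrict (\<lambda>i. X i \<omega>) (K b)) UNIV"
    using disj by (intro indep_vars_restrict[OF ind]) (auto simp: K_def disjoint_family_on_def split: bool.splits)
  moreover have "Y b \<in> borel_measurable (PiM (K b) (\<lambda>_. count_space UNIV))" for b
    by (cases b) (simp_all add: Y_def K_def)
  ultimately have "indep_vars (\<lambda>_. borel) (\<lambda>b \<omega>. Y b (restrict (\<lambda>i. X i \<omega>) (K b))) UNIV"
    by (rule indep_vars_compose2)
  moreover have "(\<lambda>b \<omega>. Y b (restrict (\<lambda>i. X i \<omega>) (K b)))
      = case_bool (\<lambda>\<omega>. G (X j \<omega>) (X j' \<omega>)) (\<lambda>\<omega>. H (X l \<omega>) (X l' \<omega>))"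
    by (intro ext) (simp add: Y_def K_def split: bool.splits)
  moreover have "(\<lambda>_. borel :: real measure) = case_bool borel borel"
    by (intro ext) (simp split: bool.splits)
  ultimately show ?thesis
    unfolding indep_var_def by simp
qed

lemma expectation_mult_le_second_moments:
  fixes X Y :: "'a \<Rightarrow> real"
  assumes [measurable]: "X \<in> borel_measurable M" "Y \<in> borel_measurable M"
    and X2: "integrable M (\<lambda>\<omega>. X \<omega> ^ 2)" and Y2: "integrable M (\<lambda>\<omega>. Y \<omega> ^ 2)"
  shows "integrable M (\<lambda>\<omega>. X \<omega> * Y \<omega>)"
    and "expectation (\<lambda>\<omega>. X \<omega> * Y \<omega>) \<le> (expectation (\<lambda>\<omega>. X \<omega> ^ 2) + expectation (\<lambda>\<omega>. Y \<omega> ^ 2)) / 2"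
proof -
  have bound: "\<bar>X \<omega> * Y \<omega>\<bar> \<le> (X \<omega> ^ 2 + Y \<omega> ^ 2) / 2" for \<omega>
    using sum_squares_bound[of "\<bar>X \<omega>\<bar>" "\<bar>Y \<omega>\<bar>"] by (simp add: abs_mult)
  have int: "integrable M (\<lambda>\<omega>. (X \<omega> ^ 2 + Y \<omega> ^ 2) / 2)" using X2 Y2 by simp
  show prod: "integrable M (\<lambda>\<omega>. X \<omega> * Y \<omega>)"
    by (rule Bochner_Integration.integrable_bound[OF int]) (use bound in auto)
  have "expectation (\<lambda>\<omega>. X \<omega> * Y \<omega>) \<le> expectation (\<lambda>\<omega>. (X \<omega> ^ 2 + Y \<omega> ^ 2) / 2)"
    by (rule integral_mono[OF prod int]) (use bound abs_le_D1 in blast)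
  then show "expectation (\<lambda>\<omega>. X \<omega> * Y \<omega>) \<le> (expectation (\<lambda>\<omega>. X \<omega> ^ 2) + expectation (\<lambda>\<omega>. Y \<omega> ^ 2)) / 2"
    using X2 Y2 by simp
qed

lemma expectation_square_sum_le:
  fixes U :: "nat \<Rightarrow> 'a \<Rightarrow> real"
  assumes int: "\<And>j l. integrable M (\<lambda>\<omega>. U j \<omega> * U l \<omega>)"
    and near: "\<And>j l. expectation (\<lambda>\<omega>. U j \<omega> * U l \<omega>) \<le> w"
    and far: "\<And>j l. Suc j < l \<Longrightarrow> expectation (\<lambda>\<omega>. U j \<omega> * U l \<omega>) = 0"
  shows "integrable M (\<lambda>\<omega>. (\<Sum>j<n. U j \<omega>) ^ 2)"
    and "expectation (\<lambda>\<omega>. (\<Sum>j<n. U j \<omega>) ^ 2) \<le> 3 * real n * w"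
proof -
  have square: "(\<lambda>\<omega>. (\<Sum>j<n. U j \<omega>) ^ 2) = (\<lambda>\<omega>. \<Sum>j<n. \<Sum>l<n. U j \<omega> * U l \<omega>)"
    by (simp add: power2_eq_square sum_product)
  show "integrable M (\<lambda>\<omega>. (\<Sum>j<n. U j \<omega>) ^ 2)" unfolding square using int by simp
  have "0 \<le> expectation (\<lambda>\<omega>. U 0 \<omega> * U 0 \<omega>)" by (simp add: integral_nonneg_AE)
  then have w: "0 \<le> w" using near order_trans by blast
  have entry: "expectation (\<lambda>\<omega>. U j \<omega> * U l \<omega>) \<le> (if l \<le> Suc j \<and> j \<le> Suc l then w else 0)" for j l
    using near[of j l] far[of j l] far[of l j] by (auto simp: mult.commute)
  have row: "(\<Sum>l<n. if l \<le> Suc j \<and> j \<le> Suc l then w else 0) \<le> 3 * w" for j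
  proof -
    have "card {l\<in>{..<n}. l \<le> Suc j \<and> j \<le> Suc l} \<le> card {j - 1, j, Suc j}"
      by (intro card_mono) auto
    also have "\<dots> \<le> 3" by (simp add: card_insert_if)
    finally show ?thesis using w by (simp add: sum.inter_filter[symmetric] mult_right_mono)
  qed
  have "expectation (\<lambda>\<omega>. (\<Sum>j<n. U j \<omega>) ^ 2) = (\<Sum>j<n. \<Sum>l<n. expectation (\<lambda>\<omega>. U j \<omega> * U l \<omega>))"
    unfolding square using int by (simp add: Bochner_Integration.integral_sum)
  also have "\<dots> \<le> (\<Sum>j<n. \<Sum>l<n. if l \<le> Suc j \<and> j \<le> Suc l then w else 0)"
    by (intro sum_mono entry)
  also have "\<dots> \<le> (\<Sum>j<n. 3 * w)" by (intro sum_mono row)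
  finally show "expectation (\<lambda>\<omega>. (\<Sum>j<n. U j \<omega>) ^ 2) \<le> 3 * real n * w" by simp
qed

lemma summable_prob_large_at_squares:
  fixes W :: "nat \<Rightarrow> 'a \<Rightarrow> real" and C e :: real
  assumes [measurable]: "\<And>n. W n \<in> borel_measurable M"
    and W2: "\<And>n. integrable M (\<lambda>\<omega>. W n \<omega> ^ 2)"
    and bound: "\<And>n. expectation (\<lambda>\<omega>. W n \<omega> ^ 2) \<le> C * n" and e: "0 < e"
  shows "summable (\<lambda>k. prob {\<omega>\<in>space M. (e * real k ^ 2) ^ 2 \<le> W (k ^ 2) \<omega> ^ 2})"
proof (rule summable_comparison_test'[where N = 1])
  show "summable (\<lambda>k. C / e ^ 2 * inverse (real k ^ 2))"
    by (intro summable_mult inverse_power_summable) auto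
  fix k :: nat assume "1 \<le> k"
  then have pos: "0 < real k ^ 2" by simp
  have "prob {\<omega>\<in>space M. (e * real k ^ 2) ^ 2 \<le> W (k ^ 2) \<omega> ^ 2}
      \<le> expectation (\<lambda>\<omega>. W (k ^ 2) \<omega> ^ 2) / (e * real k ^ 2) ^ 2"
    using e pos by (intro integral_Markov_inequality_measure[OF W2, where A = "space M"]) auto
  also have "\<dots> \<le> C * real k ^ 2 / (e * real k ^ 2) ^ 2"
    using bound[of "k ^ 2"] e pos by (intro divide_right_mono) auto
  also have "\<dots> = C / e ^ 2 * inverse (real k ^ 2)"
  proof -
    have "C * x / (e * x) ^ 2 = C / e ^ 2 * inverse x" if "0 < x" for x :: real
      using e that by (simp add: divide_simps power2_eq_square)
    then show ?thesis using pos by blast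
  qed
  finally show "norm (prob {\<omega>\<in>space M. (e * real k ^ 2) ^ 2 \<le> W (k ^ 2) \<omega> ^ 2})
      \<le> C / e ^ 2 * inverse (real k ^ 2)" by simp
qed

lemma AE_LIMSEQ_squares_0:
  fixes W :: "nat \<Rightarrow> 'a \<Rightarrow> real" and C :: real
  assumes [measurable]: "\<And>n. W n \<in> borel_measurable M"
    and W2: "\<And>n. integrable M (\<lambda>\<omega>. W n \<omega> ^ 2)"
    and bound: "\<And>n. expectation (\<lambda>\<omega>. W n \<omega> ^ 2) \<le> C * n"
  shows "AE \<omega> in M. (\<lambda>k. W (k ^ 2) \<omega> / k ^ 2) \<longlonglongrightarrow> 0"
proof (rule AE_LIMSEQ_0_if_eventually_less)
  fix e :: real assume e: "0 < e"
  have "AE \<omega> in M. eventually (\<lambda>k. \<omega> \<in> space M - {\<omega>\<in>space M. (e * real k ^ 2) ^ 2 \<le> W (k ^ 2) \<omega> ^ 2})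
      sequentially"
    using summable_prob_large_at_squares[OF _ W2 bound e] by (intro borel_cantelli_AE1) (auto simp: emeasure_eq_measure)
  then show "AE \<omega> in M. eventually (\<lambda>k. \<bar>W (k ^ 2) \<omega> / k ^ 2\<bar> < e) sequentially"
  proof (rule AE_mp, intro AE_I2 impI)
    fix \<omega> assume "eventually (\<lambda>k. \<omega> \<in> space M - {\<omega>\<in>space M. (e * real k ^ 2) ^ 2 \<le> W (k ^ 2) \<omega> ^ 2})
      sequentially"
    from this eventually_gt_at_top[of 0]
    show "eventually (\<lambda>k. \<bar>W (k ^ 2) \<omega> / k ^ 2\<bar> < e) sequentially"
    proof eventually_elim
      case (elim k)
      then have "\<bar>W (k ^ 2) \<omega>\<bar> ^ 2 < (e * real k ^ 2) ^ 2" by auto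
      then have "\<bar>W (k ^ 2) \<omega>\<bar> < e * real k ^ 2" by (rule power2_less_imp_less) (use e in simp)
      moreover have "0 < real k ^ 2" using elim by simp
      ultimately show ?case by (simp add: abs_divide pos_divide_less_eq)
    qed
  qed
qed

end

text \<open>Variables at distance at least two are independent, as for the sums
  \<open>F (X j) (X (j + 1))\<close> over an independent sequence \<open>X\<close>.\<close>
locale one_dependent_sequence = prob_space +
  fixes Y :: "nat \<Rightarrow> 'a \<Rightarrow> real" and c v :: real
  assumes measurable_Y [measurable]: "\<And>j. Y j \<in> borel_measurable M"
    and integrable_Y: "\<And>j. integrable M (Y j)" and expectation_Y: "\<And>j. expectation (Y j) = c"
    and integrable_Y_square: "\<And>j. integrable M (\<lambda>\<omega>. Y j \<omega> ^ 2)"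
    and expectation_Y_square: "\<And>j. expectation (\<lambda>\<omega>. Y j \<omega> ^ 2) \<le> v"
    and indep_Y: "\<And>j l. Suc j < l \<Longrightarrow> indep_var borel (Y j) borel (Y l)"
begin

lemma expectation_centered_sum_square_le:
  "integrable M (\<lambda>\<omega>. (\<Sum>j<n. Y j \<omega> - c) ^ 2)"
  "expectation (\<lambda>\<omega>. (\<Sum>j<n. Y j \<omega> - c) ^ 2) \<le> 3 * (v - c ^ 2) * real n"
proof -
  define U where "U j \<omega> = Y j \<omega> - c" for j \<omega>
  have [measurable]: "U j \<in> borel_measurable M" for j unfolding U_def by measurable
  have U: "integrable M (U j)" "expectation (U j) = 0" for j
    using integrable_Y expectation_Y by (simp_all add: U_def[abs_def] prob_space)
  have U2: "integrable M (\<lambda>\<omega>. U j \<omega> ^ 2)" "expectation (\<lambda>\<omega>. U j \<omega> ^ 2) \<le> v - c ^ 2" for j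
  proof -
    have eq: "(\<lambda>\<omega>. U j \<omega> ^ 2) = (\<lambda>\<omega>. Y j \<omega> ^ 2 - 2 * c * Y j \<omega> + c ^ 2)"
      by (simp add: U_def power2_eq_square algebra_simps)
    show "integrable M (\<lambda>\<omega>. U j \<omega> ^ 2)" unfolding eq using integrable_Y integrable_Y_square by simp
    show "expectation (\<lambda>\<omega>. U j \<omega> ^ 2) \<le> v - c ^ 2"
      unfolding eq using integrable_Y integrable_Y_square expectation_Y expectation_Y_square
      by (simp add: prob_space power2_eq_square)
  qed
  have prod: "integrable M (\<lambda>\<omega>. U j \<omega> * U l \<omega>)" for j l
    by (rule expectation_mult_le_second_moments) (use U2 in auto)
  have near: "expectation (\<lambda>\<omega>. U j \<omega> * U l \<omega>) \<le> v - c ^ 2" for j l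
  proof -
    have "expectation (\<lambda>\<omega>. U j \<omega> * U l \<omega>) \<le> (expectation (\<lambda>\<omega>. U j \<omega> ^ 2) + expectation (\<lambda>\<omega>. U l \<omega> ^ 2)) / 2"
      by (rule expectation_mult_le_second_moments) (use U2 in auto)
    then show ?thesis using U2(2)[of j] U2(2)[of l] by simp
  qed
  have far: "expectation (\<lambda>\<omega>. U j \<omega> * U l \<omega>) = 0" if "Suc j < l" for j l
  proof -
    have "indep_var borel ((\<lambda>x. x - c) \<circ> Y j) borel ((\<lambda>x. x - c) \<circ> Y l)"
      using that by (intro indep_var_compose[OF indep_Y]) auto
    then have "indep_var borel (U j) borel (U l)" by (simp add: U_def[abs_def] comp_def)
    then show ?thesis using indep_var_lebesgue_integral[OF _ U(1) U(1)] U(2) by simp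
  qed
  note sum_sq = expectation_square_sum_le[of U "v - c ^ 2" n, OF prod near far]
  show "integrable M (\<lambda>\<omega>. (\<Sum>j<n. Y j \<omega> - c) ^ 2)" using sum_sq(1) by (simp only: U_def)
  have "3 * real n * (v - c ^ 2) = 3 * (v - c ^ 2) * real n" by simp
  then show "expectation (\<lambda>\<omega>. (\<Sum>j<n. Y j \<omega> - c) ^ 2) \<le> 3 * (v - c ^ 2) * real n"
    using sum_sq(2) by (simp only: U_def)
qed

lemma strong_law:
  assumes nonneg: "\<And>j \<omega>. 0 \<le> Y j \<omega>"
  shows "AE \<omega> in M. (\<lambda>n. (\<Sum>j<n. Y j \<omega>) / n) \<longlonglongrightarrow> c"
proof -
  have "AE \<omega> in M. (\<lambda>k. (\<Sum>j<k ^ 2. Y j \<omega> - c) / k ^ 2) \<longlonglongrightarrow> 0"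
    by (rule AE_LIMSEQ_squares_0[OF _ expectation_centered_sum_square_le]) simp
  then show ?thesis
  proof (rule AE_mp, intro AE_I2 impI)
    fix \<omega> assume "(\<lambda>k. (\<Sum>j<k ^ 2. Y j \<omega> - c) / k ^ 2) \<longlonglongrightarrow> 0"
    then have "(\<lambda>k. (\<Sum>j<k ^ 2. Y j \<omega> - c) / k ^ 2 + c) \<longlonglongrightarrow> 0 + c" by (intro tendsto_add tendsto_const)
    moreover have "\<forall>\<^sub>F k in sequentially. (\<Sum>j<k ^ 2. Y j \<omega> - c) / k ^ 2 + c = (\<Sum>j<k ^ 2. Y j \<omega>) / k ^ 2"
      using eventually_gt_at_top[of 0] by eventually_elim (simp add: sum_subtractf field_simps)
    ultimately have "(\<lambda>k. (\<Sum>j<k ^ 2. Y j \<omega>) / k ^ 2) \<longlonglongrightarrow> c"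
      using Lim_transform_eventually by fastforce
    then show "(\<lambda>n. (\<Sum>j<n. Y j \<omega>) / n) \<longlonglongrightarrow> c"
      by (rule LIMSEQ_avg_of_LIMSEQ_avg_squares[OF nonneg])
  qed
qed

end

context prob_space
begin

lemma strong_law_adjacent_pairs:
  fixes X :: "nat \<Rightarrow> 'a \<Rightarrow> nat" and pk :: "nat \<Rightarrow> real" and F :: "nat \<Rightarrow> nat \<Rightarrow> real"
  assumes ind: "indep_vars (\<lambda>_. count_space UNIV) X UNIV"
    and pk: "\<And>j k. prob {\<omega>\<in>space M. X j \<omega> = k} = pk k"
    and F_nonneg: "\<And>a b. 0 \<le> F a b" and c: "0 \<le> c"
    and mean: "(\<Sum>a. \<Sum>b. ennreal (F a b) * ennreal (pk a * pk b)) = ennreal c"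
    and second: "(\<Sum>a. \<Sum>b. ennreal (F a b ^ 2) * ennreal (pk a * pk b)) < \<infinity>"
  shows "AE \<omega> in M. (\<lambda>n. (\<Sum>j<n. F (X j \<omega>) (X (Suc j) \<omega>)) / n) \<longlonglongrightarrow> c"
proof -
  have [measurable]: "X i \<in> measurable M (count_space UNIV)" for i
    using ind by (auto simp: indep_vars_def)
  define Y where "Y j \<omega> = F (X j \<omega>) (X (Suc j) \<omega>)" for j \<omega>
  have [measurable]: "Y j \<in> borel_measurable M" for j unfolding Y_def by measurable
  define v where "v = enn2real (\<Sum>a. \<Sum>b. ennreal (F a b ^ 2) * ennreal (pk a * pk b))"
  have "(\<integral>\<^sup>+\<omega>. ennreal (Y j \<omega>) \<partial>M) = ennreal c" for j
    using nn_integral_indep_pair[OF ind pk, of j "Suc j" "\<lambda>a b. ennreal (F a b)"]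
    by (simp add: Y_def mean)
  then have Y: "integrable M (Y j)" "expectation (Y j) = c" for j
    using nn_integral_eq_integrable[of "Y j" M c] c F_nonneg by (simp_all add: Y_def)
  have "(\<integral>\<^sup>+\<omega>. ennreal (Y j \<omega> ^ 2) \<partial>M) = ennreal v" for j
    using nn_integral_indep_pair[OF ind pk, of j "Suc j" "\<lambda>a b. ennreal (F a b ^ 2)"] second
    by (simp add: Y_def v_def ennreal_enn2real_if)
  then have Y2: "integrable M (\<lambda>\<omega>. Y j \<omega> ^ 2)" "expectation (\<lambda>\<omega>. Y j \<omega> ^ 2) = v" for j
    using nn_integral_eq_integrable[of "\<lambda>\<omega>. Y j \<omega> ^ 2" M v] by (simp_all add: v_def)
  have "indep_var borel (Y j) borel (Y l)" if "Suc j < l" for j l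
    unfolding Y_def[abs_def] using that by (intro indep_var_disjoint_pairs[OF ind]) auto
  then interpret one_dependent_sequence M Y c v
    using Y Y2 by unfold_locales auto
  show ?thesis using strong_law F_nonneg by (simp add: Y_def)
qed

end

section \<open>Geometric sensing durations\<close>

lemma LIMSEQ_Suc_power_times_power_0:
  fixes s :: real
  assumes "0 \<le> s" "s < 1"
  shows "(\<lambda>k. real (Suc k) ^ n * s ^ k) \<longlonglongrightarrow> 0"
proof (cases "n = 0")
  case True then show ?thesis using assms by (simp add: LIMSEQ_power_zero)
next
  case False
  define x where "x = root n s"
  have x: "0 \<le> x" "x < 1" "x ^ n = s"
    using assms False by (auto simp: x_def real_root_pow_pos2)
  have "(\<lambda>k. real k * x ^ k + x ^ k) \<longlonglongrightarrow> 0 + 0"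
    using powser_times_n_limit_0[of x] x by (intro tendsto_add LIMSEQ_power_zero) auto
  then have "(\<lambda>k. (real (Suc k) * x ^ k) ^ n) \<longlonglongrightarrow> 0"
    using tendsto_power[of _ 0 _ n] False by (simp add: algebra_simps power_0_left)
  moreover have "(real (Suc k) * x ^ k) ^ n = real (Suc k) ^ n * s ^ k" for k
    by (simp add: power_mult_distrib flip: x(3) power_mult) (simp add: mult.commute)
  ultimately show ?thesis by simp
qed

lemma summable_Suc_power_times_power:
  fixes q :: real
  assumes "0 \<le> q" "q < 1"
  shows "summable (\<lambda>k. real (Suc k) ^ n * q ^ k)"
proof -
  define r where "r = (1 + q) / 2"
  have r: "0 < r" "r < 1" "q < r" using assms by (auto simp: r_def)
  have "convergent (\<lambda>k. real (Suc k) ^ n * (q / r) ^ k)"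
    using LIMSEQ_Suc_power_times_power_0[of "q / r"] assms r by (auto simp: convergent_def)
  then have "Bseq (\<lambda>k. real (Suc k) ^ n * (q / r) ^ k)" by (rule convergent_imp_Bseq)
  then obtain B where B: "\<And>k. norm (real (Suc k) ^ n * (q / r) ^ k) \<le> B"
    unfolding Bseq_def by blast
  have "norm (real (Suc k) ^ n * q ^ k) \<le> B * r ^ k" for k
  proof -
    have "norm (real (Suc k) ^ n * q ^ k) = norm (real (Suc k) ^ n * (q / r) ^ k) * r ^ k"
      using r assms by (simp add: power_divide abs_mult)
    also have "\<dots> \<le> B * r ^ k" using B[of k] r by (intro mult_right_mono) auto
    finally show ?thesis .
  qed
  moreover have "summable (\<lambda>k. B * r ^ k)" using r by (intro summable_mult summable_geometric) auto
  ultimately show ?thesis by (blast intro: summable_comparison_test')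
qed

text \<open>For the sum \<open>B\<close>, \<open>(1 - q) B = \<Sum>k. ((k + 1)\<^sup>2 - k\<^sup>2) q\<^sup>k\<close> reduces it to first moments.\<close>
lemma sums_Suc_squared_times_power:
  fixes q :: real
  assumes q: "0 \<le> q" "q < 1"
  shows "(\<lambda>k. real (Suc k) ^ 2 * q ^ k) sums ((1 + q) / (1 - q) ^ 3)"
proof -
  define B where "B = (\<Sum>k. real (Suc k) ^ 2 * q ^ k)"
  have B: "(\<lambda>k. real (Suc k) ^ 2 * q ^ k) sums B"
    unfolding B_def using summable_Suc_power_times_power[OF q] by (simp add: summable_sums)
  have "(\<lambda>k. real (Suc k) ^ 2 * q ^ Suc k) sums (q * B)"
    using sums_mult[OF B, of q] by (simp add: mult_ac)
  then have shifted: "(\<lambda>k. real k ^ 2 * q ^ k) sums (q * B)"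
    using sums_Suc_iff[of "\<lambda>k. real k ^ 2 * q ^ k" "q * B"] by simp
  have "(\<lambda>k. 2 * (real (Suc k) * q ^ k) - q ^ k) sums (2 * (1 / (1 - q) ^ 2) - 1 / (1 - q))"
    using geometric_deriv_sums[of q] geometric_sums[of q] q by (intro sums_diff sums_mult) auto
  moreover have "(\<lambda>k. 2 * (real (Suc k) * q ^ k) - q ^ k)
      = (\<lambda>k. real (Suc k) ^ 2 * q ^ k - real k ^ 2 * q ^ k)"
    by (auto simp: power2_eq_square algebra_simps)
  ultimately have "B - q * B = 2 * (1 / (1 - q) ^ 2) - 1 / (1 - q)"
    using sums_diff[OF B shifted] sums_unique2 by fastforce
  then have "(1 - q) * B = 2 * (1 / (1 - q) ^ 2) - 1 / (1 - q)"
    by (simp add: algebra_simps)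
  also have "\<dots> = (1 + q) / (1 - q) ^ 2"
    using q by (simp add: divide_simps power2_eq_square) (simp add: algebra_simps)
  finally have "(1 - q) * B = (1 + q) / (1 - q) ^ 2" .
  then have "B = (1 + q) / (1 - q) ^ 2 / (1 - q)"
    using q by (simp add: eq_divide_eq mult.commute)
  then have "B = (1 + q) / (1 - q) ^ 3"
    by (simp add: power3_eq_cube power2_eq_square)
  then show ?thesis using B by simp
qed

definition geom_weight :: "real \<Rightarrow> nat \<Rightarrow> real" where
  "geom_weight mu k = (if k = 0 then 0 else (1 - 1 / mu) ^ (k - 1) * (1 / mu))"

context
  fixes mu :: real
  assumes mu: "1 \<le> mu"
begin

lemma geom_weight_nonneg: "0 \<le> geom_weight mu k"
  using mu by (simp add: geom_weight_def)

lemma sums_times_geom_weightI: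
  "(\<lambda>k. f (Suc k) * (1 / mu) * (1 - 1 / mu) ^ k) sums x \<Longrightarrow> (\<lambda>k. f k * geom_weight mu k) sums x"
  using sums_Suc_iff[of "\<lambda>k. f k * geom_weight mu k" x] by (simp add: geom_weight_def mult_ac)

lemma geom_weight_sums: "geom_weight mu sums 1"
proof -
  have "(\<lambda>k. 1 / mu * (1 - 1 / mu) ^ k) sums (1 / mu * (1 / (1 - (1 - 1 / mu))))"
    using mu by (intro sums_mult geometric_sums) auto
  then show ?thesis using mu sums_times_geom_weightI[of "\<lambda>_. 1" 1] by simp
qed

lemma sums_of_nat_times_geom_weight: "(\<lambda>k. real k * geom_weight mu k) sums mu"
proof -
  have "(\<lambda>k. 1 / mu * (real (Suc k) * (1 - 1 / mu) ^ k)) sums (1 / mu * (1 / (1 - (1 - 1 / mu)) ^ 2))"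
    using mu by (intro sums_mult geometric_deriv_sums) auto
  then show ?thesis
    using mu by (intro sums_times_geom_weightI) (simp add: power2_eq_square mult_ac)
qed

lemma sums_square_times_geom_weight: "(\<lambda>k. real k ^ 2 * geom_weight mu k) sums (2 * mu ^ 2 - mu)"
proof -
  have "(\<lambda>k. 1 / mu * (real (Suc k) ^ 2 * (1 - 1 / mu) ^ k))
      sums (1 / mu * ((1 + (1 - 1 / mu)) / (1 - (1 - 1 / mu)) ^ 3))"
    using mu by (intro sums_mult sums_Suc_squared_times_power) auto
  moreover have "1 / mu * ((1 + (1 - 1 / mu)) / (1 - (1 - 1 / mu)) ^ 3) = 2 * mu ^ 2 - mu"
    using mu by (simp add: field_simps power2_eq_square power3_eq_cube)
  ultimately show ?thesis by (intro sums_times_geom_weightI) (simp add: mult_ac)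
qed

lemma summable_power_times_geom_weight: "summable (\<lambda>k. (real k + 1) ^ n * geom_weight mu k)"
proof -
  have "summable (\<lambda>k. 2 ^ n / mu * (real (Suc k) ^ n * (1 - 1 / mu) ^ k))"
    using mu by (intro summable_mult summable_Suc_power_times_power) auto
  then have "summable (\<lambda>k. (real (Suc k) + 1) ^ n * geom_weight mu (Suc k))"
  proof (rule summable_comparison_test'[where N = 0])
    fix k :: nat
    have "(real (Suc k) + 1) ^ n \<le> 2 ^ n * real (Suc k) ^ n"
      by (simp flip: power_mult_distrib add: power_mono)
    moreover have "0 \<le> (1 - 1 / mu) ^ k / mu" using mu by simp
    ultimately have "(real (Suc k) + 1) ^ n * ((1 - 1 / mu) ^ k / mu)
        \<le> 2 ^ n * real (Suc k) ^ n * ((1 - 1 / mu) ^ k / mu)"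
      by (rule mult_right_mono)
    then show "norm ((real (Suc k) + 1) ^ n * geom_weight mu (Suc k))
        \<le> 2 ^ n / mu * (real (Suc k) ^ n * (1 - 1 / mu) ^ k)"
      using mu by (simp add: geom_weight_def)
  qed
  then show ?thesis by (subst summable_Suc_iff[symmetric]) simp
qed

end

lemma suminf_suminf_ennreal_eq:
  fixes g :: "nat \<Rightarrow> nat \<Rightarrow> real"
  assumes nonneg: "\<And>a b. 0 \<le> g a b" and inner: "\<And>a. (\<lambda>b. g a b) sums s a" and outer: "s sums t"
  shows "(\<Sum>a. \<Sum>b. ennreal (g a b)) = ennreal t"
proof -
  have s_nonneg: "0 \<le> s a" for a using inner[of a] nonneg by (metis sums_iff suminf_nonneg)
  have "(\<Sum>a. \<Sum>b. ennreal (g a b)) = (\<Sum>a. ennreal (s a))"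
    using suminf_ennreal_eq[OF nonneg inner] by simp
  also have "\<dots> = ennreal t" by (rule suminf_ennreal_eq[OF s_nonneg outer])
  finally show ?thesis .
qed

context
  fixes mu :: real
  assumes mu: "1 \<le> mu"
begin

lemma suminf_suminf_of_nat_geom_weight:
  "(\<Sum>a. \<Sum>b. ennreal (real a) * ennreal (geom_weight mu a * geom_weight mu b)) = ennreal mu"
proof -
  have "(\<Sum>a. \<Sum>b. ennreal (real a * geom_weight mu a * geom_weight mu b)) = ennreal mu"
  proof (rule suminf_suminf_ennreal_eq)
    show "0 \<le> real a * geom_weight mu a * geom_weight mu b" for a b
      using geom_weight_nonneg[OF mu] by simp
    show "(\<lambda>b. real a * geom_weight mu a * geom_weight mu b) sums (real a * geom_weight mu a * 1)" for a
      by (intro sums_mult geom_weight_sums[OF mu])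
    show "(\<lambda>a. real a * geom_weight mu a * 1) sums mu"
      using sums_of_nat_times_geom_weight[OF mu] by simp
  qed
  then show ?thesis using geom_weight_nonneg[OF mu] by (simp add: ennreal_mult' mult.assoc)
qed

lemma suminf_suminf_block_area_geom_weight:
  assumes d: "1 \<le> d"
  shows "(\<Sum>a. \<Sum>b. ennreal (block_area d a b) * ennreal (geom_weight mu a * geom_weight mu b))
    = ennreal (2 * mu ^ 2 + (real d - 2) * mu)"
proof -
  let ?w = "geom_weight mu"
  define c where "c a = (real a + real d - 1) * mu + (mu ^ 2 - mu)" for a
  have "(\<lambda>b. (real a + real d - 1) * (real b * ?w b) + (real b ^ 2 * ?w b - real b * ?w b) / 2)
      sums ((real a + real d - 1) * mu + ((2 * mu ^ 2 - mu) - mu) / 2)" for a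
    using sums_of_nat_times_geom_weight[OF mu] sums_square_times_geom_weight[OF mu]
    by (intro sums_add sums_mult sums_divide sums_diff)
  moreover have "(\<lambda>b. (real a + real d - 1) * (real b * ?w b) + (real b ^ 2 * ?w b - real b * ?w b) / 2)
      = (\<lambda>b. block_area d a b * ?w b)" for a
    by (intro ext) (simp add: block_area_def power2_eq_square algebra_simps)
  moreover have "(real a + real d - 1) * mu + ((2 * mu ^ 2 - mu) - mu) / 2 = c a" for a
    by (simp add: c_def field_simps power2_eq_square)
  ultimately have inner: "(\<lambda>b. block_area d a b * ?w b) sums c a" for a by metis
  have "(\<lambda>a. mu * (real a * ?w a) + ((real d - 1) * mu + mu ^ 2 - mu) * ?w a)
      sums (mu * mu + ((real d - 1) * mu + mu ^ 2 - mu) * 1)"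
    using sums_of_nat_times_geom_weight[OF mu] geom_weight_sums[OF mu] by (intro sums_add sums_mult)
  moreover have "(\<lambda>a. mu * (real a * ?w a) + ((real d - 1) * mu + mu ^ 2 - mu) * ?w a) = (\<lambda>a. ?w a * c a)"
    by (intro ext) (simp add: c_def algebra_simps)
  moreover have "mu * mu + ((real d - 1) * mu + mu ^ 2 - mu) * 1 = 2 * mu ^ 2 + (real d - 2) * mu"
    by (simp add: algebra_simps power2_eq_square)
  ultimately have outer: "(\<lambda>a. ?w a * c a) sums (2 * mu ^ 2 + (real d - 2) * mu)" by metis
  have "(\<Sum>a. \<Sum>b. ennreal (?w a * (block_area d a b * ?w b))) = ennreal (2 * mu ^ 2 + (real d - 2) * mu)"
    using geom_weight_nonneg[OF mu] block_area_nonneg[OF d]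
    by (intro suminf_suminf_ennreal_eq[OF _ sums_mult[OF inner] outer]) simp
  then show ?thesis
    using geom_weight_nonneg[OF mu] block_area_nonneg[OF d] by (simp add: ennreal_mult' mult_ac)
qed

lemma suminf_suminf_square_geom_weight_finite:
  fixes F :: "nat \<Rightarrow> nat \<Rightarrow> real" and K :: real
  assumes F: "\<And>a b. 0 \<le> F a b" "\<And>a b. F a b \<le> K * (real a + 1) * (real b + 1) ^ 2"
  shows "(\<Sum>a. \<Sum>b. ennreal (F a b ^ 2) * ennreal (geom_weight mu a * geom_weight mu b)) < \<infinity>"
proof -
  define m where "m n = (\<Sum>k. (real k + 1) ^ n * geom_weight mu k)" for n :: nat
  have m: "(\<lambda>k. (real k + 1) ^ n * geom_weight mu k) sums m n" for n
    unfolding m_def using summable_power_times_geom_weight[OF mu] by (simp add: summable_sums)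
  define G where "G a b = K ^ 2 * ((real a + 1) ^ 2 * geom_weight mu a) * ((real b + 1) ^ 4 * geom_weight mu b)"
    for a b
  have le: "ennreal (F a b ^ 2) * ennreal (geom_weight mu a * geom_weight mu b) \<le> ennreal (G a b)" for a b
  proof -
    have "F a b ^ 2 \<le> (K * (real a + 1) * (real b + 1) ^ 2) ^ 2" by (intro power_mono F)
    then have "F a b ^ 2 * (geom_weight mu a * geom_weight mu b)
        \<le> (K * (real a + 1) * (real b + 1) ^ 2) ^ 2 * (geom_weight mu a * geom_weight mu b)"
      using geom_weight_nonneg[OF mu] by (intro mult_right_mono) auto
    also have "\<dots> = G a b" by (simp add: G_def power_mult_distrib flip: power_mult)
    finally have "ennreal (F a b ^ 2 * (geom_weight mu a * geom_weight mu b)) \<le> ennreal (G a b)"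
      by (rule ennreal_leI)
    then show ?thesis by (simp add: ennreal_mult')
  qed
  have sum_G: "(\<Sum>a. \<Sum>b. ennreal (G a b)) = ennreal (K ^ 2 * m 2 * m 4)"
  proof (rule suminf_suminf_ennreal_eq)
    show "0 \<le> G a b" for a b using geom_weight_nonneg[OF mu] by (simp add: G_def)
    show "(\<lambda>b. G a b) sums (K ^ 2 * ((real a + 1) ^ 2 * geom_weight mu a) * m 4)" for a
      unfolding G_def by (intro sums_mult m)
    show "(\<lambda>a. K ^ 2 * ((real a + 1) ^ 2 * geom_weight mu a) * m 4) sums (K ^ 2 * m 2 * m 4)"
      by (intro sums_mult2 sums_mult m)
  qed
  have "(\<Sum>a. \<Sum>b. ennreal (F a b ^ 2) * ennreal (geom_weight mu a * geom_weight mu b))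
      \<le> (\<Sum>a. \<Sum>b. ennreal (G a b))"
    by (intro suminf_le summableI le allI)
  also have "\<dots> < \<infinity>" unfolding sum_G by simp
  finally show ?thesis .
qed

end

context prob_space
begin
lemma prob_geometric_rv:
  assumes mu: "1 \<le> mu" and X: "geometric_rv M X mu"
  shows "prob {\<omega>\<in>space M. X \<omega> = k} = geom_weight mu k"
proof -
  have [measurable]: "X \<in> measurable M (count_space UNIV)" using X by (simp add: geometric_rv_def)
  define A where "A k = {\<omega>\<in>space M. X \<omega> = k}" for k
  have pos: "prob (A k) = geom_weight mu k" if "1 \<le> k" for k
    using X that by (simp add: geometric_rv_def geom_weight_def A_def)
  have "(\<lambda>k. prob (A k)) sums prob (\<Union>k. A k)"
    by (rule measure_UNION) (auto simp: A_def disjoint_family_on_def)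
  moreover have "(\<Union>k. A k) = space M" by (auto simp: A_def)
  ultimately have "(\<lambda>k. prob (A k)) sums 1" by (simp add: prob_space)
  then have "(\<lambda>k. prob (A (Suc k))) sums (1 - prob (A 0))"
    using sums_Suc_iff[of "\<lambda>k. prob (A k)" "1 - prob (A 0)"] by simp
  moreover have "(\<lambda>k. prob (A (Suc k))) sums 1"
    using sums_Suc_iff[of "geom_weight mu" 1] geom_weight_sums[OF mu] pos
    by (simp add: geom_weight_def)
  ultimately have "prob (A 0) = 0" using sums_unique2 by fastforce
  then show ?thesis using pos by (cases k) (auto simp: A_def geom_weight_def)
qed

lemma AE_regular_durations:
  fixes X :: "nat \<Rightarrow> 'a \<Rightarrow> nat"
  assumes ind: "indep_vars (\<lambda>_. count_space UNIV) X UNIV"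
    and X: "\<And>n. geometric_rv M (X n) mu" and mu: "1 \<le> mu" and d: "1 \<le> d"
  shows "AE \<omega> in M. (\<forall>j. 1 \<le> X j \<omega>) \<and> regular_durations mu d (\<lambda>j. X j \<omega>)"
proof -
  have pk: "prob {\<omega>\<in>space M. X j \<omega> = k} = geom_weight mu k" for j k
    by (rule prob_geometric_rv[OF mu X])
  have "AE \<omega> in M. X j \<omega> \<noteq> 0" for j
    using pk[of j 0] X[of j]
    by (intro AE_I[of _ _ "{\<omega>\<in>space M. X j \<omega> = 0}"])
       (auto simp: emeasure_eq_measure geom_weight_def geometric_rv_def)
  then have pos: "AE \<omega> in M. \<forall>j. 1 \<le> X j \<omega>" by (simp add: AE_all_countable Suc_le_eq)
  have "0 \<le> mu * (2 * mu + real d - 2)" using mu by simp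
  then have area_mean: "0 \<le> 2 * mu ^ 2 + (real d - 2) * mu" by (simp add: algebra_simps power2_eq_square)
  have "real a \<le> 1 * (real a + 1) * (real b + 1) ^ 2" for a b
    by (rule order_trans[of _ "real a + 1"]) (simp_all add: mult_le_cancel_left1 one_le_power)
  then have mean: "AE \<omega> in M. (\<lambda>n. (\<Sum>j<n. real (X j \<omega>)) / n) \<longlonglongrightarrow> mu"
    using mu by (intro strong_law_adjacent_pairs[OF ind pk, where F = "\<lambda>a b. real a"]
        suminf_suminf_of_nat_geom_weight suminf_suminf_square_geom_weight_finite[where K = 1]) auto
  have area: "AE \<omega> in M. (\<lambda>n. (\<Sum>j<n. block_area d (X j \<omega>) (X (Suc j) \<omega>)) / n)
      \<longlonglongrightarrow> 2 * mu ^ 2 + (real d - 2) * mu"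
    using mu d area_mean block_area_nonneg block_area_le
    by (intro strong_law_adjacent_pairs[OF ind pk] suminf_suminf_block_area_geom_weight
        suminf_suminf_square_geom_weight_finite[where K = "real d + 1"]) auto
  show ?thesis using pos mean area by eventually_elim (simp add: regular_durations_def)
qed

end

section \<open>Walks and hop distances\<close>

definition lazy_walk :: "('v \<Rightarrow> 'v \<Rightarrow> bool) \<Rightarrow> 'v \<Rightarrow> 'v \<Rightarrow> nat \<Rightarrow> bool" where
  "lazy_walk E x y L \<longleftrightarrow> (\<exists>w. w 0 = x \<and> w L = y \<and> (\<forall>j<L. w (Suc j) = w j \<or> E (w j) (w (Suc j))))"

lemma lazy_walk_refl: "lazy_walk E x x L"
  unfolding lazy_walk_def by (intro exI[of _ "\<lambda>_. x"]) auto

lemma lazy_walk_snoc: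
  assumes "lazy_walk E x y L" "z = y \<or> E y z"
  shows "lazy_walk E x z (Suc L)"
proof -
  obtain w where "w 0 = x" "w L = y" "\<forall>j<L. w (Suc j) = w j \<or> E (w j) (w (Suc j))"
    using assms(1) unfolding lazy_walk_def by blast
  then show ?thesis
    using assms(2) unfolding lazy_walk_def
    by (intro exI[of _ "w(Suc L := z)"]) (auto simp: less_Suc_eq)
qed

lemma walk_to_snoc:
  assumes "walk_to E x y L" "E y z"
  shows "walk_to E x z (Suc L)"
proof -
  obtain w where "w 0 = x" "w L = y" "\<forall>j<L. E (w j) (w (Suc j))"
    using assms(1) unfolding walk_to_def by blast
  then show ?thesis
    using assms(2) unfolding walk_to_def
    by (intro exI[of _ "w(Suc L := z)"]) (auto simp: less_Suc_eq)
qed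

lemma lazy_walk_imp_walk_to: "lazy_walk E x y L \<Longrightarrow> \<exists>L'\<le>L. walk_to E x y L'"
proof (induction L arbitrary: y)
  case 0
  then have "y = x" by (auto simp: lazy_walk_def)
  then show ?case by (auto simp: walk_to_def intro!: exI[of _ "\<lambda>_. x"])
next
  case (Suc L)
  then obtain w where w: "w 0 = x" "w (Suc L) = y" "\<forall>j<Suc L. w (Suc j) = w j \<or> E (w j) (w (Suc j))"
    unfolding lazy_walk_def by blast
  then have "lazy_walk E x (w L) L" unfolding lazy_walk_def by (intro exI[of _ w]) auto
  then obtain L' where "L' \<le> L" "walk_to E x (w L) L'" using Suc.IH by blast
  then show ?case using w(2) w(3)[rule_format, of L] walk_to_snoc by (metis le_SucI lessI Suc_le_mono)
qed

lemma hop_dist_le: "walk_to E x base L \<Longrightarrow> hop_dist E base x \<le> L"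
  unfolding hop_dist_def by (rule Least_le)

lemma walk_to_hop_dist: "graph_ok V E base \<Longrightarrow> x \<in> V \<Longrightarrow> walk_to E x base (hop_dist E base x)"
  unfolding hop_dist_def graph_ok_def by (blast intro: LeastI_ex)

lemma hop_dist_eq_0_iff: "graph_ok V E base \<Longrightarrow> x \<in> V \<Longrightarrow> hop_dist E base x = 0 \<longleftrightarrow> x = base"
  using walk_to_hop_dist[of V E base x] hop_dist_le[of E base base 0]
  by (auto simp: walk_to_def)

lemma hop_dist_pos: "graph_ok V E base \<Longrightarrow> i \<in> V - {base} \<Longrightarrow> 1 \<le> hop_dist E base i"
  using hop_dist_eq_0_iff[of V E base i] by (simp add: Suc_le_eq)

lemma funpow_parent_hop_dist:
  assumes G: "graph_ok V E base" and T: "spt V E base par"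
  shows "i \<in> V \<Longrightarrow> (par ^^ hop_dist E base i) i = base"
proof (induction "hop_dist E base i" arbitrary: i)
  case 0
  then show ?case using hop_dist_eq_0_iff[OF G] by (metis funpow_0)
next
  case (Suc n)
  then have "i \<noteq> base" using hop_dist_eq_0_iff[OF G] by force
  then have "par i \<in> V" "hop_dist E base (par i) + 1 = hop_dist E base i"
    using T Suc.prems unfolding spt_def by blast+
  moreover from this have "(par ^^ n) (par i) = base" using Suc.hyps by (metis Suc_eq_plus1 nat.inject)
  ultimately show ?case using Suc.hyps(2)[symmetric] by (simp only: funpow_Suc_right o_apply)
qed

section \<open>Trajectories of admissible policies\<close>

definition delivered :: "'v \<Rightarrow> nat \<Rightarrow> 'v traj \<Rightarrow> 'v \<Rightarrow> nat \<Rightarrow> nat set" where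
  "delivered base N tr i t = {n. \<exists>k<N. \<exists>s\<le>t. pos tr k s = base \<and> hold tr k s i = Some n}"

lemma fresh_start_eq_Max:
  "fresh_start base N dur tr i t = (if delivered base N tr i t = {} then 0
     else Max (att_start (sstart tr i) (dur i) ` delivered base N tr i t))"
  by (simp only: fresh_start_def delivered_def Let_def)

context
  fixes V :: "'v set" and E :: "'v \<Rightarrow> 'v \<Rightarrow> bool" and base :: 'v and N :: nat
    and m :: "'v \<Rightarrow> nat" and dur :: "'v \<Rightarrow> nat \<Rightarrow> nat" and tr :: "'v traj"
  assumes adm: "admissible V E base N m dur tr"
begin

lemma held_sample_origin:
  assumes "k < N" "hold tr k t i = Some n"
  shows "(pos tr k t = i \<and> att_done (sstart tr i) (dur i) n \<le> t)
    \<or> (\<exists>k'<N. 0 < t \<and> pos tr k' t = pos tr k t \<and> hold tr k' (t - 1) i = Some n)"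
proof -
  have "\<forall>k<N. \<forall>t i n. hold tr k t i = Some n \<longrightarrow> i \<in> V - {base} \<and>
      ((pos tr k t = i \<and> att_done (sstart tr i) (dur i) n \<le> t)
       \<or> (\<exists>k'<N. 0 < t \<and> pos tr k' t = pos tr k t \<and> hold tr k' (t - 1) i = Some n))"
    using adm unfolding admissible_def by blast
  then show ?thesis using assms by blast
qed

lemma robot_step: "k < N \<Longrightarrow> pos tr k (Suc t) = pos tr k t \<or> E (pos tr k t) (pos tr k (Suc t))"
  using adm unfolding admissible_def by blast

lemma held_sample_lazy_walk:
  "k < N \<Longrightarrow> hold tr k t i = Some n \<Longrightarrow> att_done (sstart tr i) (dur i) n \<le> t
     \<and> lazy_walk E i (pos tr k t) (t - att_done (sstart tr i) (dur i) n)"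
proof (induction t arbitrary: k)
  case 0
  from held_sample_origin[OF 0] show ?case by (auto intro: lazy_walk_refl)
next
  case (Suc t)
  let ?g = "att_done (sstart tr i) (dur i) n"
  from held_sample_origin[OF Suc.prems] show ?case
  proof (elim disjE exE conjE)
    fix k' assume k': "k' < N" "pos tr k' (Suc t) = pos tr k (Suc t)" "hold tr k' (Suc t - 1) i = Some n"
    with Suc.IH have "?g \<le> t" "lazy_walk E i (pos tr k' t) (t - ?g)" by auto
    then have "lazy_walk E i (pos tr k' (Suc t)) (Suc (t - ?g))"
      using robot_step[OF k'(1)] by (blast intro: lazy_walk_snoc)
    then show ?thesis using \<open>?g \<le> t\<close> k'(2) by (simp add: Suc_diff_le)
  qed (auto intro: lazy_walk_refl)
qed

lemma delivery_time_le_of_held_at_base: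
  assumes "k < N" "pos tr k s = base" "hold tr k s i = Some n"
  shows "delivery_time (sstart tr i) (dur i) (hop_dist E base i) n \<le> s"
proof -
  let ?g = "att_done (sstart tr i) (dur i) n"
  have "?g \<le> s" "lazy_walk E i base (s - ?g)"
    using held_sample_lazy_walk[OF assms(1,3)] unfolding assms(2) by simp_all
  moreover obtain L where "L \<le> s - ?g" "walk_to E i base L"
    using lazy_walk_imp_walk_to[OF calculation(2)] by blast
  ultimately show ?thesis using hop_dist_le[of E i base L] by (simp add: delivery_time_def)
qed

context
  fixes i :: 'v
  assumes schedule: "delivery_schedule (dur i) (hop_dist E base i)"
begin

interpretation delivery_schedule "sstart tr i" "dur i" "hop_dist E base i" by (rule schedule)

lemma delivered_le_block_index:
  assumes "n \<in> delivered base N tr i t"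
  shows "deliv 0 \<le> t" and "n \<le> block_index deliv t"
proof -
  obtain k s where "k < N" "s \<le> t" "pos tr k s = base" "hold tr k s i = Some n"
    using assms unfolding delivered_def by blast
  then have "deliv n \<le> t" using delivery_time_le_of_held_at_base by fastforce
  moreover show t0: "deliv 0 \<le> t"
    using calculation strict_mono_less_eq[OF strict_mono_delivery_time, of 0 n] by simp
  ultimately show "n \<le> block_index deliv t"
    using le_block_index_iff[OF strict_mono_delivery_time t0] by simp
qed

lemma finite_delivered: "finite (delivered base N tr i t)"
proof (rule finite_subset)
  show "delivered base N tr i t \<subseteq> {..block_index deliv t}" using delivered_le_block_index(2) by blast
qed simp

lemma fresh_start_le_ideal:
  "fresh_start base N dur tr i t \<le> ideal_fresh_start (sstart tr i) (dur i) (hop_dist E base i) t"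
proof (cases "delivered base N tr i t = {}")
  case False
  then have t0: "deliv 0 \<le> t" using delivered_le_block_index(1) by blast
  have "Max (att_start (sstart tr i) (dur i) ` delivered base N tr i t)
      \<le> att_start (sstart tr i) (dur i) (block_index deliv t)"
    using finite_delivered False delivered_le_block_index(2)
    by (subst Max_le_iff) (auto intro: monoD[OF mono_att_start])
  then show ?thesis using False t0 by (simp add: fresh_start_eq_Max ideal_fresh_start_def)
qed (simp add: fresh_start_eq_Max)

lemma fresh_start_eq_ideal:
  assumes t0: "deliv 0 \<le> t" and last: "block_index deliv t \<in> delivered base N tr i t"
  shows "fresh_start base N dur tr i t = ideal_fresh_start (sstart tr i) (dur i) (hop_dist E base i) t"
proof -
  have "Max (att_start (sstart tr i) (dur i) ` delivered base N tr i t)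
      = att_start (sstart tr i) (dur i) (block_index deliv t)"
    using finite_delivered last delivered_le_block_index(2)
    by (intro Max_eqI) (auto intro: monoD[OF mono_att_start])
  then show ?thesis using t0 last by (auto simp: fresh_start_eq_Max ideal_fresh_start_def)
qed

end

end

lemma fresh_start_eventually_ideal:
  assumes adm: "admissible V E base N m dur tr" and cov: "full_conveyor V E base N par dur tr"
    and G: "graph_ok V E base" and T: "spt V E base par"
    and i: "i \<in> V - {base}" and dur: "\<forall>j. 1 \<le> dur i j"
  shows "\<exists>t1. \<forall>t\<ge>t1. fresh_start base N dur tr i t = ideal_fresh_start (sstart tr i) (dur i) (hop_dist E base i) t"
proof -
  have schedule: "delivery_schedule (dur i) (hop_dist E base i)"
    using dur hop_dist_pos[OF G i] by unfold_locales auto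
  interpret delivery_schedule "sstart tr i" "dur i" "hop_dist E base i" by (rule schedule)
  obtain t0 where carry: "\<forall>n. t0 \<le> att_done (sstart tr i) (dur i) n \<longrightarrow>
      (\<exists>k<N. role tr k = None \<and> (\<forall>j\<le>hop_dist E base i.
         pos tr k (att_done (sstart tr i) (dur i) n + j) = (par ^^ j) i
       \<and> hold tr k (att_done (sstart tr i) (dur i) n + j) i = Some n))"
    using cov i unfolding full_conveyor_def by blast
  have "fresh_start base N dur tr i t = ideal_fresh_start (sstart tr i) (dur i) (hop_dist E base i) t"
    if t: "deliv t0 \<le> t" for t
  proof (rule fresh_start_eq_ideal[OF adm schedule])
    show t0: "deliv 0 \<le> t"
      using t strict_mono_less_eq[OF strict_mono_delivery_time, of 0 t0] by simp
    let ?n = "block_index deliv t"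
    have "t0 \<le> ?n" using t le_block_index_iff[OF strict_mono_delivery_time t0] by simp
    then have "t0 \<le> att_done (sstart tr i) (dur i) ?n" using le_att_done[of ?n] by linarith
    then obtain k where "k < N" and "\<forall>j\<le>hop_dist E base i.
        pos tr k (att_done (sstart tr i) (dur i) ?n + j) = (par ^^ j) i
      \<and> hold tr k (att_done (sstart tr i) (dur i) ?n + j) i = Some ?n"
      using carry by blast
    then have "k < N" "pos tr k (deliv ?n) = base" "hold tr k (deliv ?n) i = Some ?n"
      using funpow_parent_hop_dist[OF G T] i by (auto simp: delivery_time_def)
    moreover have "deliv ?n \<le> t" by (rule block_index_le[OF strict_mono_delivery_time t0])
    ultimately show "?n \<in> delivered base N tr i t" unfolding delivered_def by blast
  qed
  then show ?thesis by blast
qed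

section \<open>Average age of information\<close>

context
  fixes V :: "'v set" and E :: "'v \<Rightarrow> 'v \<Rightarrow> bool" and base :: 'v and N :: nat
    and m :: "'v \<Rightarrow> nat" and dur :: "'v \<Rightarrow> nat \<Rightarrow> nat" and tr :: "'v traj" and i :: 'v and mu :: real
  assumes adm: "admissible V E base N m dur tr" and G: "graph_ok V E base" and i: "i \<in> V - {base}"
    and dur: "\<forall>j. 1 \<le> dur i j" and regular: "regular_durations mu (hop_dist E base i) (dur i)"
begin

lemma delivery_schedule_node: "delivery_schedule (dur i) (hop_dist E base i)"
  using dur hop_dist_pos[OF G i] by unfold_locales auto

interpretation delivery_schedule "sstart tr i" "dur i" "hop_dist E base i"
  by (rule delivery_schedule_node)

lemma ideal_age_node_avg_tendsto:
  "(\<lambda>T. (\<Sum>t<T. ideal_age (sstart tr i) (dur i) (hop_dist E base i) t) / T)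
     \<longlonglongrightarrow> 2 * mu - 2 + real (hop_dist E base i)"
  using ideal_age_avg_tendsto regular by (simp add: regular_durations_def algebra_simps)

lemma avg_aoi_node_ge: "ereal (2 * mu - 2 + real (hop_dist E base i)) \<le> avg_aoi_node base N dur tr i"
proof -
  have "ideal_age (sstart tr i) (dur i) (hop_dist E base i) t \<le> aoi base N dur tr i t" for t
    using fresh_start_le_ideal[OF adm delivery_schedule_node, of t] by (simp add: ideal_age_def aoi_def)
  then have "(\<Sum>t<T. ideal_age (sstart tr i) (dur i) (hop_dist E base i) t) / T \<le> (\<Sum>t<T. aoi base N dur tr i t) / T"
    for T by (intro divide_right_mono sum_mono) auto
  then have "limsup (\<lambda>T. ereal ((\<Sum>t<T. ideal_age (sstart tr i) (dur i) (hop_dist E base i) t) / T))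
      \<le> avg_aoi_node base N dur tr i"
    unfolding avg_aoi_node_def by (intro Limsup_mono) simp
  then show ?thesis
    using lim_imp_Limsup[OF trivial_limit_sequentially tendsto_ereal[OF ideal_age_node_avg_tendsto]] by simp
qed

lemma avg_aoi_node_eq_if_full_conveyor:
  assumes "full_conveyor V E base N par dur tr" "spt V E base par"
  shows "avg_aoi_node base N dur tr i = ereal (2 * mu - 2 + real (hop_dist E base i))"
proof -
  obtain t1 where "\<forall>t\<ge>t1. fresh_start base N dur tr i t = ideal_fresh_start (sstart tr i) (dur i) (hop_dist E base i) t"
    using fresh_start_eventually_ideal[OF adm assms(1) G assms(2) i dur] by blast
  then have "(\<lambda>T. (\<Sum>t<T. aoi base N dur tr i t) / T) \<longlonglongrightarrow> 2 * mu - 2 + real (hop_dist E base i)"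
    by (intro LIMSEQ_avg_eventually_eq[OF _ ideal_age_node_avg_tendsto, of t1])
      (simp add: aoi_def ideal_age_def)
  from lim_imp_Limsup[OF trivial_limit_sequentially tendsto_ereal[OF this]]
  show ?thesis by (simp add: avg_aoi_node_def)
qed

end

lemma avg_aoi_eq_if_nodes_eq:
  assumes "\<And>i. i \<in> V - {base} \<Longrightarrow> avg_aoi_node base N dur tr i = ereal (L i)"
  shows "avg_aoi V base N dur tr = ereal (1 / real (card (V - {base})) * (\<Sum>i\<in>V - {base}. L i))"
proof -
  have "(\<Sum>i\<in>V - {base}. avg_aoi_node base N dur tr i) = (\<Sum>i\<in>V - {base}. ereal (L i))"
    using assms by (rule sum.cong[OF refl])
  then show ?thesis by (simp add: avg_aoi_def sum_ereal)
qed

lemma avg_aoi_ge_if_nodes_ge: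
  assumes "\<And>i. i \<in> V - {base} \<Longrightarrow> ereal (L i) \<le> avg_aoi_node base N dur tr i"
  shows "ereal (1 / real (card (V - {base})) * (\<Sum>i\<in>V - {base}. L i)) \<le> avg_aoi V base N dur tr"
proof -
  have "ereal (\<Sum>i\<in>V - {base}. L i) \<le> (\<Sum>i\<in>V - {base}. avg_aoi_node base N dur tr i)"
    unfolding sum_ereal[symmetric] using assms by (rule sum_mono)
  then have "ereal (1 / real (card (V - {base}))) * ereal (\<Sum>i\<in>V - {base}. L i) \<le> avg_aoi V base N dur tr"
    unfolding avg_aoi_def by (rule ereal_mult_left_mono) simp
  then show ?thesis by simp
qed

definition regular_sensing ::
  "'v set \<Rightarrow> ('v \<Rightarrow> 'v \<Rightarrow> bool) \<Rightarrow> 'v \<Rightarrow> ('v \<Rightarrow> real) \<Rightarrow> ('v \<Rightarrow> nat \<Rightarrow> nat) \<Rightarrow> bool" where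
  "regular_sensing V E base mean dur \<longleftrightarrow> (\<forall>i\<in>V - {base}.
     (\<forall>j. 1 \<le> dur i j) \<and> regular_durations (mean i) (hop_dist E base i) (dur i))"

lemma avg_aoi_ge_regular_sensing:
  assumes "admissible V E base N m dur tr" "graph_ok V E base" "regular_sensing V E base mean dur"
  shows "ereal (1 / real (card (V - {base})) * (\<Sum>i\<in>V - {base}. 2 * mean i - 2 + real (hop_dist E base i)))
    \<le> avg_aoi V base N dur tr"
  using assms by (intro avg_aoi_ge_if_nodes_ge avg_aoi_node_ge) (auto simp: regular_sensing_def)

lemma avg_aoi_node_eq_regular_sensing:
  assumes "admissible V E base N m dur tr" "full_conveyor V E base N par dur tr"
    "graph_ok V E base" "spt V E base par" "regular_sensing V E base mean dur" "i \<in> V - {base}"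
  shows "avg_aoi_node base N dur tr i = ereal (2 * mean i - 2 + real (hop_dist E base i))"
  using assms by (intro avg_aoi_node_eq_if_full_conveyor) (auto simp: regular_sensing_def)

lemma avg_aoi_eq_regular_sensing:
  assumes "admissible V E base N m dur tr" "full_conveyor V E base N par dur tr"
    "graph_ok V E base" "spt V E base par" "regular_sensing V E base mean dur"
  shows "avg_aoi V base N dur tr
    = ereal (1 / real (card (V - {base})) * (\<Sum>i\<in>V - {base}. 2 * mean i - 2 + real (hop_dist E base i)))"
  using assms by (intro avg_aoi_eq_if_nodes_eq avg_aoi_node_eq_regular_sensing)

lemma (in prob_space) AE_regular_sensing:
  fixes S :: "'v \<Rightarrow> nat \<Rightarrow> 'a \<Rightarrow> nat"
  assumes G: "graph_ok V E base" and mean: "\<forall>i\<in>V - {base}. 1 \<le> mean i"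
    and S: "\<forall>i\<in>V - {base}. indep_vars (\<lambda>_. count_space UNIV) (S i) UNIV
      \<and> (\<forall>n. geometric_rv M (S i n) (mean i))"
  shows "AE \<omega> in M. regular_sensing V E base mean (\<lambda>i n. S i n \<omega>)"
  unfolding regular_sensing_def using G
  by (intro eventually_ball_finite ballI AE_regular_durations)
    (use mean S hop_dist_pos[OF G] in \<open>auto simp: graph_ok_def\<close>)

theorem theorem3:
  fixes V :: "'v set" and E :: "'v \<Rightarrow> 'v \<Rightarrow> bool" and base :: 'v
    and N :: nat and m :: "'v \<Rightarrow> nat" and mu :: "'v \<Rightarrow> nat \<Rightarrow> real"
    and M :: "'a measure" and S :: "'v \<Rightarrow> nat \<Rightarrow> 'a \<Rightarrow> nat"
    and par :: "'v \<Rightarrow> 'v" and \<pi> :: "'a \<Rightarrow> 'v traj"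
  assumes G: "graph_ok V E base"
    and P: "prob_space M"
    and alloc: "\<forall>i\<in>V - {base}. 1 \<le> m i" "(\<Sum>i\<in>V - {base}. m i) \<le> N"
    and mu: "\<forall>i\<in>V - {base}. \<forall>k\<ge>1. 1 \<le> mu i k \<and> mu i (Suc k) < mu i k
               \<and> mu i (k + 1) - mu i (k + 2) \<le> mu i k - mu i (k + 1)"
    and sens: "\<forall>i\<in>V - {base}. prob_space.indep_vars M (\<lambda>_. count_space UNIV) (S i) UNIV
               \<and> (\<forall>n. geometric_rv M (S i n) (mu i (m i)))"
    and T: "spt V E base par"
    and adm: "\<forall>\<omega>\<in>space M. admissible V E base N m (\<lambda>i n. S i n \<omega>) (\<pi> \<omega>)"
    and cov: "\<forall>\<omega>\<in>space M. full_conveyor V E base N par (\<lambda>i n. S i n \<omega>) (\<pi> \<omega>)"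
  shows "(\<forall>i\<in>V - {base}. AE \<omega> in M.
            avg_aoi_node base N (\<lambda>i n. S i n \<omega>) (\<pi> \<omega>) i
              = ereal (2 * mu i (m i) - 2 + real (hop_dist E base i)))
       \<and> (AE \<omega> in M. avg_aoi V base N (\<lambda>i n. S i n \<omega>) (\<pi> \<omega>)
              = ereal (1 / real (card (V - {base}))
                   * (\<Sum>i\<in>V - {base}. 2 * mu i (m i) - 2 + real (hop_dist E base i))))
       \<and> (\<forall>\<pi>' :: 'a \<Rightarrow> 'v traj.
            (\<forall>\<omega>\<in>space M. admissible V E base N m (\<lambda>i n. S i n \<omega>) (\<pi>' \<omega>)) \<longrightarrow>
            (AE \<omega> in M. ereal (1 / real (card (V - {base}))
                   * (\<Sum>i\<in>V - {base}. 2 * mu i (m i) - 2 + real (hop_dist E base i)))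
                 \<le> avg_aoi V base N (\<lambda>i n. S i n \<omega>) (\<pi>' \<omega>))
          \<and> (AE \<omega> in M. avg_aoi V base N (\<lambda>i n. S i n \<omega>) (\<pi> \<omega>)
                 \<le> avg_aoi V base N (\<lambda>i n. S i n \<omega>) (\<pi>' \<omega>)))"
proof -
  interpret prob_space M by (rule P)
  let ?regular = "\<lambda>\<omega>. regular_sensing V E base (\<lambda>i. mu i (m i)) (\<lambda>i n. S i n \<omega>)"
  let ?bound = "1 / real (card (V - {base})) * (\<Sum>i\<in>V - {base}. 2 * mu i (m i) - 2 + real (hop_dist E base i))"
  have "AE \<omega> in M. ?regular \<omega>"
    using mu alloc(1) by (intro AE_regular_sensing[OF G _ sens]) auto
  then have typical: "AE \<omega> in M. \<omega> \<in> space M \<and> ?regular \<omega>" using AE_space by eventually_elim simp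
  have exact: "avg_aoi V base N (\<lambda>i n. S i n \<omega>) (\<pi> \<omega>) = ereal ?bound"
    if "\<omega> \<in> space M \<and> ?regular \<omega>" for \<omega>
    using that adm cov by (intro avg_aoi_eq_regular_sensing[OF _ _ G T]) auto
  show ?thesis
  proof (intro conjI ballI allI impI)
    show "AE \<omega> in M. avg_aoi_node base N (\<lambda>i n. S i n \<omega>) (\<pi> \<omega>) i
        = ereal (2 * mu i (m i) - 2 + real (hop_dist E base i))" if "i \<in> V - {base}" for i
      using typical by eventually_elim (use adm cov that avg_aoi_node_eq_regular_sensing[OF _ _ G T] in blast)
    show "AE \<omega> in M. avg_aoi V base N (\<lambda>i n. S i n \<omega>) (\<pi> \<omega>) = ereal ?bound"
      using typical by eventually_elim (rule exact)
    fix \<pi>' :: "'a \<Rightarrow> 'v traj"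
    assume adm': "\<forall>\<omega>\<in>space M. admissible V E base N m (\<lambda>i n. S i n \<omega>) (\<pi>' \<omega>)"
    have lower: "AE \<omega> in M. ereal ?bound \<le> avg_aoi V base N (\<lambda>i n. S i n \<omega>) (\<pi>' \<omega>)"
      using typical by eventually_elim (use adm' avg_aoi_ge_regular_sensing[OF _ G] in blast)
    then show "AE \<omega> in M. ereal ?bound \<le> avg_aoi V base N (\<lambda>i n. S i n \<omega>) (\<pi>' \<omega>)" .
    show "AE \<omega> in M. avg_aoi V base N (\<lambda>i n. S i n \<omega>) (\<pi> \<omega>) \<le> avg_aoi V base N (\<lambda>i n. S i n \<omega>) (\<pi>' \<omega>)"
      using typical lower by eventually_elim (simp add: exact)
  qed
qed

end
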